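(* Let $R$ be a ring and $M$ a left $R$-module. The following are equivalent: (a) $M$ is critically compressible; (b) $M$ is compressible and monoform; (c) $M$ is fully retractable and $\mathrm{End}_R(M)$ is a left Ore domain; (d) $M$ is retractable, $\mathrm{End}_R(M)$ is a left Ore domain and $\mathrm{End}_R(\widehat{M})$ is isomorphic to the division ring of fractions of $\mathrm{End}_R(M)$.
   Context: A nonzero module $M$ is compressible if it embeds into each of its nonzero submodules; critically compressible if it is compressible and does not embed into any factor module $M/N$ with $N\neq0$; monoform if every nonzero homomorphism $f:N\to M$ from a submodule $N\subseteq M$ is injective. $M$ is retractable if $\mathrm{Hom}_R(M,N)\neq0$ for every nonzero submodule $N$; fully retractable if for every nonzero submodule $N\subseteq M$ and every nonzero homomorphism $g:N\to M$ one has $\mathrm{Hom}_R(M,N)g\neq0$. A left Ore domain is a domain $S$ with $Sa\cap Sb\neq0$ for nonzero $a,b$. $\widehat{M}=\sum\{\mathrm{Im}f: f\in\mathrm{Hom}_R(M,E(M))\}$ is the self-injective hull, $E(M)$ the injective hull. *)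

theory Defs
  imports "HOL-Algebra.Module" "HOL-Algebra.QuotRing"
begin

text \<open>HOL-Algebra's locale module requires a commutative ring, so we use the same
  axioms over an arbitrary unital ring R.\<close>

locale left_module = R?: ring R + M?: abelian_group M
  for R :: "('r, 'c) ring_scheme" (structure) and M :: "('r, 'a, 'd) module_scheme" (structure) +
  assumes smult_closed:
      "\<lbrakk>a \<in> carrier R; x \<in> carrier M\<rbrakk> \<Longrightarrow> a \<odot>\<^bsub>M\<^esub> x \<in> carrier M"
    and smult_l_distr:
      "\<lbrakk>a \<in> carrier R; b \<in> carrier R; x \<in> carrier M\<rbrakk> \<Longrightarrow>
      (a \<oplus> b) \<odot>\<^bsub>M\<^esub> x = a \<odot>\<^bsub>M\<^esub> x \<oplus>\<^bsub>M\<^esub> b \<odot>\<^bsub>M\<^esub> x"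
    and smult_r_distr:
      "\<lbrakk>a \<in> carrier R; x \<in> carrier M; y \<in> carrier M\<rbrakk> \<Longrightarrow>
      a \<odot>\<^bsub>M\<^esub> (x \<oplus>\<^bsub>M\<^esub> y) = a \<odot>\<^bsub>M\<^esub> x \<oplus>\<^bsub>M\<^esub> a \<odot>\<^bsub>M\<^esub> y"
    and smult_assoc1:
      "\<lbrakk>a \<in> carrier R; b \<in> carrier R; x \<in> carrier M\<rbrakk> \<Longrightarrow>
      (a \<otimes> b) \<odot>\<^bsub>M\<^esub> x = a \<odot>\<^bsub>M\<^esub> (b \<odot>\<^bsub>M\<^esub> x)"
    and smult_one:
      "x \<in> carrier M \<Longrightarrow> \<one> \<odot>\<^bsub>M\<^esub> x = x"

text \<open>R-linear maps from the subset A of M to the subset B of N (A, B submodules).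
  Maps are only relevant on A.\<close>

definition lin_map ::
  "('r, 'c) ring_scheme \<Rightarrow> ('r, 'a, 'd) module_scheme \<Rightarrow> 'a set \<Rightarrow>
   ('r, 'b, 'e) module_scheme \<Rightarrow> 'b set \<Rightarrow> ('a \<Rightarrow> 'b) set" where
  "lin_map R M A N B =
    {f. f \<in> A \<rightarrow> B \<and>
        (\<forall>x\<in>A. \<forall>y\<in>A. f (x \<oplus>\<^bsub>M\<^esub> y) = f x \<oplus>\<^bsub>N\<^esub> f y) \<and>
        (\<forall>a\<in>carrier R. \<forall>x\<in>A. f (a \<odot>\<^bsub>M\<^esub> x) = a \<odot>\<^bsub>N\<^esub> f x)}"

definition embeds ::
  "('r, 'c) ring_scheme \<Rightarrow> ('r, 'a, 'd) module_scheme \<Rightarrow> 'a set \<Rightarrow>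
   ('r, 'b, 'e) module_scheme \<Rightarrow> 'b set \<Rightarrow> bool" where
  "embeds R M A N B \<longleftrightarrow> (\<exists>f \<in> lin_map R M A N B. inj_on f A)"

definition quotient_module ::
  "('r, 'a, 'd) module_scheme \<Rightarrow> 'a set \<Rightarrow> ('r, 'a set) module" where
  "quotient_module M N =
    \<lparr>carrier = a_rcosets\<^bsub>M\<^esub> N,
     mult = (\<lambda>_ _. undefined), one = undefined,
     zero = N,
     add = set_add M,
     smult = (\<lambda>a C. set_add M N ((\<lambda>x. a \<odot>\<^bsub>M\<^esub> x) ` C))\<rparr>"

definition nonzero_module :: "('r, 'a, 'd) module_scheme \<Rightarrow> bool" where
  "nonzero_module M \<longleftrightarrow> carrier M \<noteq> {\<zero>\<^bsub>M\<^esub>}"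

definition nonzero_submodule ::
  "('r, 'c) ring_scheme \<Rightarrow> ('r, 'a, 'd) module_scheme \<Rightarrow> 'a set \<Rightarrow> bool" where
  "nonzero_submodule R M N \<longleftrightarrow> submodule N R M \<and> N \<noteq> {\<zero>\<^bsub>M\<^esub>}"

definition compressible :: "('r, 'c) ring_scheme \<Rightarrow> ('r, 'a, 'd) module_scheme \<Rightarrow> bool" where
  "compressible R M \<longleftrightarrow> nonzero_module M \<and>
     (\<forall>N. nonzero_submodule R M N \<longrightarrow> embeds R M (carrier M) M N)"

definition critically_compressible ::
  "('r, 'c) ring_scheme \<Rightarrow> ('r, 'a, 'd) module_scheme \<Rightarrow> bool" where
  "critically_compressible R M \<longleftrightarrow> compressible R M \<and>
     (\<forall>N. nonzero_submodule R M N \<longrightarrow>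
        \<not> embeds R M (carrier M) (quotient_module M N) (carrier (quotient_module M N)))"

definition monoform :: "('r, 'c) ring_scheme \<Rightarrow> ('r, 'a, 'd) module_scheme \<Rightarrow> bool" where
  "monoform R M \<longleftrightarrow> nonzero_module M \<and>
     (\<forall>N f. submodule N R M \<longrightarrow> f \<in> lin_map R M N M (carrier M) \<longrightarrow>
        (\<exists>x\<in>N. f x \<noteq> \<zero>\<^bsub>M\<^esub>) \<longrightarrow> inj_on f N)"

definition retractable :: "('r, 'c) ring_scheme \<Rightarrow> ('r, 'a, 'd) module_scheme \<Rightarrow> bool" where
  "retractable R M \<longleftrightarrow>
     (\<forall>N. nonzero_submodule R M N \<longrightarrow>
        (\<exists>f \<in> lin_map R M (carrier M) M N. \<exists>x\<in>carrier M. f x \<noteq> \<zero>\<^bsub>M\<^esub>))"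

text \<open>Maps are written on the right in the paper, so Hom(M,N)g is the set of
  composites "first h then g", i.e. g \<circ> h : M \<rightarrow> M.\<close>
definition fully_retractable ::
  "('r, 'c) ring_scheme \<Rightarrow> ('r, 'a, 'd) module_scheme \<Rightarrow> bool" where
  "fully_retractable R M \<longleftrightarrow>
     (\<forall>N g. nonzero_submodule R M N \<longrightarrow> g \<in> lin_map R M N M (carrier M) \<longrightarrow>
        (\<exists>y\<in>N. g y \<noteq> \<zero>\<^bsub>M\<^esub>) \<longrightarrow>
        (\<exists>h \<in> lin_map R M (carrier M) M N. \<exists>x\<in>carrier M. g (h x) \<noteq> \<zero>\<^bsub>M\<^esub>))"

text \<open>End_R(M), with maps written on the right (as in the paper): the product f g
  means "first f, then g", i.e. the function composite g \<circ> f.\<close>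
definition End_ring :: "('r, 'c) ring_scheme \<Rightarrow> ('r, 'a, 'd) module_scheme \<Rightarrow> ('a \<Rightarrow> 'a) ring" where
  "End_ring R M =
    \<lparr>carrier = {f. f \<in> lin_map R M (carrier M) M (carrier M) \<and> f \<in> extensional (carrier M)},
     mult = (\<lambda>f g. compose (carrier M) g f),
     one = (\<lambda>x\<in>carrier M. x),
     zero = (\<lambda>x\<in>carrier M. \<zero>\<^bsub>M\<^esub>),
     add = (\<lambda>f g. \<lambda>x\<in>carrier M. f x \<oplus>\<^bsub>M\<^esub> g x)\<rparr>"

definition nc_domain :: "('a, 'b) ring_scheme \<Rightarrow> bool" where
  "nc_domain S \<longleftrightarrow> ring S \<and> \<one>\<^bsub>S\<^esub> \<noteq> \<zero>\<^bsub>S\<^esub> \<and>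
     (\<forall>a\<in>carrier S. \<forall>b\<in>carrier S. a \<otimes>\<^bsub>S\<^esub> b = \<zero>\<^bsub>S\<^esub> \<longrightarrow> a = \<zero>\<^bsub>S\<^esub> \<or> b = \<zero>\<^bsub>S\<^esub>)"

definition left_ore_domain :: "('a, 'b) ring_scheme \<Rightarrow> bool" where
  "left_ore_domain S \<longleftrightarrow> nc_domain S \<and>
     (\<forall>a\<in>carrier S - {\<zero>\<^bsub>S\<^esub>}. \<forall>b\<in>carrier S - {\<zero>\<^bsub>S\<^esub>}.
        \<exists>s\<in>carrier S. \<exists>t\<in>carrier S. s \<otimes>\<^bsub>S\<^esub> a = t \<otimes>\<^bsub>S\<^esub> b \<and> s \<otimes>\<^bsub>S\<^esub> a \<noteq> \<zero>\<^bsub>S\<^esub>)"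

definition division_ring :: "('a, 'b) ring_scheme \<Rightarrow> bool" where
  "division_ring Q \<longleftrightarrow> ring Q \<and> \<one>\<^bsub>Q\<^esub> \<noteq> \<zero>\<^bsub>Q\<^esub> \<and> carrier Q - {\<zero>\<^bsub>Q\<^esub>} \<subseteq> Units Q"

definition division_ring_of_fractions ::
  "('a, 'b) ring_scheme \<Rightarrow> ('q, 'c) ring_scheme \<Rightarrow> ('a \<Rightarrow> 'q) \<Rightarrow> bool" where
  "division_ring_of_fractions S Q \<phi> \<longleftrightarrow>
     division_ring Q \<and> \<phi> \<in> ring_hom S Q \<and> inj_on \<phi> (carrier S) \<and>
     (\<forall>s\<in>carrier S - {\<zero>\<^bsub>S\<^esub>}. \<phi> s \<in> Units Q) \<and>
     (\<forall>q\<in>carrier Q. \<exists>s\<in>carrier S - {\<zero>\<^bsub>S\<^esub>}. \<exists>t\<in>carrier S.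
        q = inv\<^bsub>Q\<^esub> (\<phi> s) \<otimes>\<^bsub>Q\<^esub> \<phi> t)"

definition regular_module :: "('r, 'c) ring_scheme \<Rightarrow> ('r, 'r) module" where
  "regular_module R =
    \<lparr>carrier = carrier R, mult = mult R, one = one R, zero = zero R, add = add R,
     smult = mult R\<rparr>"

text \<open>Injectivity, stated via Baer's criterion.\<close>
definition injective_module ::
  "('r, 'c) ring_scheme \<Rightarrow> ('r, 'e, 'd) module_scheme \<Rightarrow> bool" where
  "injective_module R E \<longleftrightarrow>
     (\<forall>I f. submodule I R (regular_module R) \<longrightarrow> f \<in> lin_map R (regular_module R) I E (carrier E) \<longrightarrow>
        (\<exists>e\<in>carrier E. \<forall>a\<in>I. f a = a \<odot>\<^bsub>E\<^esub> e))"

definition injective_hull ::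
  "('r, 'c) ring_scheme \<Rightarrow> ('r, 'a, 'd) module_scheme \<Rightarrow> ('r, 'e, 'f) module_scheme \<Rightarrow> ('a \<Rightarrow> 'e) \<Rightarrow> bool" where
  "injective_hull R M E \<iota> \<longleftrightarrow>
     left_module R E \<and> injective_module R E \<and>
     \<iota> \<in> lin_map R M (carrier M) E (carrier E) \<and> inj_on \<iota> (carrier M) \<and>
     (\<forall>N. nonzero_submodule R E N \<longrightarrow> N \<inter> \<iota> ` carrier M \<noteq> {\<zero>\<^bsub>E\<^esub>})"

definition generated_submodule ::
  "('r, 'c) ring_scheme \<Rightarrow> ('r, 'e, 'd) module_scheme \<Rightarrow> 'e set \<Rightarrow> 'e set" where
  "generated_submodule R E S = \<Inter>{N. submodule N R E \<and> S \<subseteq> N}"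

text \<open>The self-injective hull M^ = \<Sum>{Im f : f \<in> Hom_R(M, E(M))}, as a submodule of E(M).\<close>
definition self_injective_hull ::
  "('r, 'c) ring_scheme \<Rightarrow> ('r, 'a, 'd) module_scheme \<Rightarrow> ('r, 'e, 'f) module_scheme \<Rightarrow> 'e set" where
  "self_injective_hull R M E =
     generated_submodule R E (\<Union>{f ` carrier M | f. f \<in> lin_map R M (carrier M) E (carrier E)})"

end

theory Submission
  imports Defs
begin

text \<open>
  (a) \<Leftrightarrow> (b): if f : N \<rightarrow> M is nonzero with nonzero kernel K, compressibility embeds M
  into f(N) \<cong> N/K \<subseteq> M/K; conversely, an embedding h : M \<rightarrow> M/N pulls back along the
  projection to a map h\<inverse> \<circ> \<pi>, defined on a submodule containing N, which is nonzero but kills N.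

  (b) \<Leftrightarrow> (c): in a monoform module nonzero endomorphisms are injective and nonzero
  submodules meet, so End(M) is a domain, and compressibility embeds M into a(M) \<inter> b(M),
  which yields the Ore condition.  Conversely, the Ore condition applied to a map from M into
  the kernel of f and a map h : M \<rightarrow> N with f \<circ> h \<noteq> 0 forces every nonzero f to be injective.

  (c) \<Leftrightarrow> (d): for monoform M every nonzero map M \<rightarrow> E(M) is injective, and an endomorphism
  of M^ is determined by its restriction to any nonzero part of M.  Since E(M) is injective,
  partial maps into M^ extend, so a nonzero endomorphism of M^ can be inverted, End(M) embeds
  into the division ring End(M^), and compressibility writes every element as a left
  fraction.  Conversely, if End(M^) is a division ring, a nonzero f : N \<rightarrow> M extends to an
  invertible endomorphism of M^, so f is injective.
\<close>

context left_module
begin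

lemma smult_r_null: "a \<in> carrier R \<Longrightarrow> a \<odot>\<^bsub>M\<^esub> \<zero>\<^bsub>M\<^esub> = \<zero>\<^bsub>M\<^esub>"
proof -
  assume a: "a \<in> carrier R"
  have "a \<odot>\<^bsub>M\<^esub> \<zero>\<^bsub>M\<^esub> \<oplus>\<^bsub>M\<^esub> a \<odot>\<^bsub>M\<^esub> \<zero>\<^bsub>M\<^esub> = a \<odot>\<^bsub>M\<^esub> \<zero>\<^bsub>M\<^esub> \<oplus>\<^bsub>M\<^esub> \<zero>\<^bsub>M\<^esub>"
    using smult_r_distr[OF a, of "\<zero>\<^bsub>M\<^esub>" "\<zero>\<^bsub>M\<^esub>"] a smult_closed by simp
  then show ?thesis using a smult_closed by simp
qed

lemma smult_l_null: "x \<in> carrier M \<Longrightarrow> \<zero>\<^bsub>R\<^esub> \<odot>\<^bsub>M\<^esub> x = \<zero>\<^bsub>M\<^esub>"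
proof -
  assume x: "x \<in> carrier M"
  have "\<zero>\<^bsub>R\<^esub> \<odot>\<^bsub>M\<^esub> x \<oplus>\<^bsub>M\<^esub> \<zero>\<^bsub>R\<^esub> \<odot>\<^bsub>M\<^esub> x = \<zero>\<^bsub>R\<^esub> \<odot>\<^bsub>M\<^esub> x \<oplus>\<^bsub>M\<^esub> \<zero>\<^bsub>M\<^esub>"
    using smult_l_distr[of "\<zero>\<^bsub>R\<^esub>" "\<zero>\<^bsub>R\<^esub>" x] x smult_closed by simp
  then show ?thesis using x smult_closed by simp
qed

lemma smult_l_minus:
  "a \<in> carrier R \<Longrightarrow> x \<in> carrier M \<Longrightarrow> (\<ominus>\<^bsub>R\<^esub> a) \<odot>\<^bsub>M\<^esub> x = \<ominus>\<^bsub>M\<^esub> (a \<odot>\<^bsub>M\<^esub> x)"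
proof -
  assume a: "a \<in> carrier R" and x: "x \<in> carrier M"
  have "(\<ominus>\<^bsub>R\<^esub> a) \<odot>\<^bsub>M\<^esub> x \<oplus>\<^bsub>M\<^esub> a \<odot>\<^bsub>M\<^esub> x = \<zero>\<^bsub>M\<^esub>"
    using smult_l_distr[of "\<ominus>\<^bsub>R\<^esub> a" a x] a x smult_l_null by (simp add: R.l_neg)
  then show ?thesis using a x smult_closed by (simp add: M.minus_equality)
qed

lemma smult_r_minus:
  "a \<in> carrier R \<Longrightarrow> x \<in> carrier M \<Longrightarrow> a \<odot>\<^bsub>M\<^esub> (\<ominus>\<^bsub>M\<^esub> x) = \<ominus>\<^bsub>M\<^esub> (a \<odot>\<^bsub>M\<^esub> x)"
proof -
  assume a: "a \<in> carrier R" and x: "x \<in> carrier M"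
  have "a \<odot>\<^bsub>M\<^esub> (\<ominus>\<^bsub>M\<^esub> x) \<oplus>\<^bsub>M\<^esub> a \<odot>\<^bsub>M\<^esub> x = \<zero>\<^bsub>M\<^esub>"
    using smult_r_distr[of a "\<ominus>\<^bsub>M\<^esub> x" x] a x smult_r_null by (simp add: M.l_neg)
  then show ?thesis using a x smult_closed by (simp add: M.minus_equality)
qed

lemma smult_minus_one: "x \<in> carrier M \<Longrightarrow> (\<ominus>\<^bsub>R\<^esub> \<one>\<^bsub>R\<^esub>) \<odot>\<^bsub>M\<^esub> x = \<ominus>\<^bsub>M\<^esub> x"
  by (simp add: smult_l_minus smult_one)

lemma smult_l_diff:
  "r \<in> carrier R \<Longrightarrow> r' \<in> carrier R \<Longrightarrow> b \<in> carrier M \<Longrightarrow>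
    (r \<ominus>\<^bsub>R\<^esub> r') \<odot>\<^bsub>M\<^esub> b = r \<odot>\<^bsub>M\<^esub> b \<ominus>\<^bsub>M\<^esub> r' \<odot>\<^bsub>M\<^esub> b"
  by (simp add: R.minus_eq M.minus_eq smult_l_distr smult_l_minus)

lemma diff_eq_zero_iff: "a \<in> carrier M \<Longrightarrow> b \<in> carrier M \<Longrightarrow> a \<ominus>\<^bsub>M\<^esub> b = \<zero>\<^bsub>M\<^esub> \<longleftrightarrow> a = b"
proof
  assume a: "a \<in> carrier M" and b: "b \<in> carrier M" and e: "a \<ominus>\<^bsub>M\<^esub> b = \<zero>\<^bsub>M\<^esub>"
  have "a = (a \<ominus>\<^bsub>M\<^esub> b) \<oplus>\<^bsub>M\<^esub> b" using a b by (simp add: M.minus_eq M.a_assoc M.l_neg)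
  then show "a = b" using e b by simp
qed (simp add: M.minus_eq M.r_neg)

lemma add_eq_add_iff_diff_eq:
  assumes "a \<in> carrier M" "b \<in> carrier M" "c \<in> carrier M" "d \<in> carrier M"
  shows "a \<oplus>\<^bsub>M\<^esub> b = c \<oplus>\<^bsub>M\<^esub> d \<longleftrightarrow> b \<ominus>\<^bsub>M\<^esub> d = c \<ominus>\<^bsub>M\<^esub> a"
proof -
  have "(a \<oplus>\<^bsub>M\<^esub> b) \<ominus>\<^bsub>M\<^esub> (c \<oplus>\<^bsub>M\<^esub> d) = (b \<ominus>\<^bsub>M\<^esub> d) \<ominus>\<^bsub>M\<^esub> (c \<ominus>\<^bsub>M\<^esub> a)"
    using assms by (simp add: M.minus_eq M.minus_add M.minus_minus M.a_ac)
  then show ?thesis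
    using assms diff_eq_zero_iff[of "a \<oplus>\<^bsub>M\<^esub> b" "c \<oplus>\<^bsub>M\<^esub> d"] diff_eq_zero_iff[of "b \<ominus>\<^bsub>M\<^esub> d" "c \<ominus>\<^bsub>M\<^esub> a"]
    by (simp add: M.minus_eq)
qed

lemma submoduleI:
  assumes "N \<subseteq> carrier M" "\<zero>\<^bsub>M\<^esub> \<in> N"
    "\<And>x y. x \<in> N \<Longrightarrow> y \<in> N \<Longrightarrow> x \<oplus>\<^bsub>M\<^esub> y \<in> N"
    "\<And>x. x \<in> N \<Longrightarrow> \<ominus>\<^bsub>M\<^esub> x \<in> N"
    "\<And>a x. a \<in> carrier R \<Longrightarrow> x \<in> N \<Longrightarrow> a \<odot>\<^bsub>M\<^esub> x \<in> N"
  shows "submodule N R M"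
  apply (intro submodule.intro subgroup.intro submodule_axioms.intro)
  using assms by (auto simp: a_inv_def)

lemma submoduleE:
  assumes "submodule N R M"
  shows "N \<subseteq> carrier M" "\<zero>\<^bsub>M\<^esub> \<in> N"
    "\<And>x y. x \<in> N \<Longrightarrow> y \<in> N \<Longrightarrow> x \<oplus>\<^bsub>M\<^esub> y \<in> N"
    "\<And>x. x \<in> N \<Longrightarrow> \<ominus>\<^bsub>M\<^esub> x \<in> N"
    "\<And>a x. a \<in> carrier R \<Longrightarrow> x \<in> N \<Longrightarrow> a \<odot>\<^bsub>M\<^esub> x \<in> N"
  using assms unfolding submodule_def submodule_axioms_def subgroup_def
  by (auto simp: a_inv_def)

lemma submodule_diff_closed:
  "submodule N R M \<Longrightarrow> x \<in> N \<Longrightarrow> y \<in> N \<Longrightarrow> x \<ominus>\<^bsub>M\<^esub> y \<in> N"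
  using submoduleE(3,4) by (simp add: a_minus_def)

lemma carrier_is_submodule: "submodule (carrier M) R M"
  by (rule submoduleI) (auto intro: smult_closed)

lemma nonzero_submodule_carrier: "nonzero_module M \<Longrightarrow> nonzero_submodule R M (carrier M)"
  by (simp add: nonzero_module_def nonzero_submodule_def carrier_is_submodule)

lemma nonzero_submoduleE:
  assumes "nonzero_submodule R M N"
  obtains x where "x \<in> N" "x \<noteq> \<zero>\<^bsub>M\<^esub>"
  using assms submoduleE(2) unfolding nonzero_submodule_def by blast

lemma nonzero_moduleE:
  assumes "nonzero_module M"
  obtains x where "x \<in> carrier M" "x \<noteq> \<zero>\<^bsub>M\<^esub>"
  using assms unfolding nonzero_module_def by blast

lemma submodule_Int:
  assumes A: "submodule A R M" and B: "submodule B R M"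
  shows "submodule (A \<inter> B) R M"
  using submoduleE[OF A] submoduleE[OF B] by (intro submoduleI) auto

lemma submodule_Inter:
  assumes "\<F> \<noteq> {}" "\<And>N. N \<in> \<F> \<Longrightarrow> submodule N R M"
  shows "submodule (\<Inter>\<F>) R M"
proof (rule submoduleI)
  note S = submoduleE[OF assms(2)]
  show "\<Inter>\<F> \<subseteq> carrier M" using assms S(1) by blast
  show "\<zero>\<^bsub>M\<^esub> \<in> \<Inter>\<F>" using S(2) by blast
  show "x \<oplus>\<^bsub>M\<^esub> y \<in> \<Inter>\<F>" if "x \<in> \<Inter>\<F>" "y \<in> \<Inter>\<F>" for x y using that S(3) by blast
  show "\<ominus>\<^bsub>M\<^esub> x \<in> \<Inter>\<F>" if "x \<in> \<Inter>\<F>" for x using that S(4) by blast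
  show "a \<odot>\<^bsub>M\<^esub> x \<in> \<Inter>\<F>" if "a \<in> carrier R" "x \<in> \<Inter>\<F>" for a x using that S(5) by blast
qed

lemma submodule_is_left_module:
  assumes H: "submodule H R M"
  shows "left_module R (M\<lparr>carrier := H\<rparr>)"
proof -
  note S = submoduleE[OF H]
  have "abelian_group (M\<lparr>carrier := H\<rparr>)"
  proof (rule abelian_groupI)
    fix x y z assume xyz: "x \<in> carrier (M\<lparr>carrier := H\<rparr>)" "y \<in> carrier (M\<lparr>carrier := H\<rparr>)"
      "z \<in> carrier (M\<lparr>carrier := H\<rparr>)"
    then have c: "x \<in> carrier M" "y \<in> carrier M" "z \<in> carrier M" using S(1) by auto
    show "x \<oplus>\<^bsub>M\<lparr>carrier := H\<rparr>\<^esub> y \<in> carrier (M\<lparr>carrier := H\<rparr>)" using xyz S(3) by simp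
    show "x \<oplus>\<^bsub>M\<lparr>carrier := H\<rparr>\<^esub> y \<oplus>\<^bsub>M\<lparr>carrier := H\<rparr>\<^esub> z
        = x \<oplus>\<^bsub>M\<lparr>carrier := H\<rparr>\<^esub> (y \<oplus>\<^bsub>M\<lparr>carrier := H\<rparr>\<^esub> z)"
      using c by (simp add: M.a_assoc)
    show "x \<oplus>\<^bsub>M\<lparr>carrier := H\<rparr>\<^esub> y = y \<oplus>\<^bsub>M\<lparr>carrier := H\<rparr>\<^esub> x" using c by (simp add: M.a_comm)
    show "\<zero>\<^bsub>M\<lparr>carrier := H\<rparr>\<^esub> \<oplus>\<^bsub>M\<lparr>carrier := H\<rparr>\<^esub> x = x" using c by simp
    show "\<exists>y\<in>carrier (M\<lparr>carrier := H\<rparr>). y \<oplus>\<^bsub>M\<lparr>carrier := H\<rparr>\<^esub> x = \<zero>\<^bsub>M\<lparr>carrier := H\<rparr>\<^esub>"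
      using xyz S(4) c by (intro bexI[of _ "\<ominus>\<^bsub>M\<^esub> x"]) (simp_all add: M.l_neg)
  qed (use S(2) in simp)
  then show ?thesis
    by (intro left_module.intro R.ring_axioms left_module_axioms.intro)
      (use S in \<open>auto simp: smult_l_distr smult_r_distr smult_assoc1 smult_one subsetD[OF S(1)]\<close>)
qed

end

lemma lin_mapI:
  assumes "\<And>x. x \<in> A \<Longrightarrow> f x \<in> B"
    "\<And>x y. x \<in> A \<Longrightarrow> y \<in> A \<Longrightarrow> f (x \<oplus>\<^bsub>M\<^esub> y) = f x \<oplus>\<^bsub>N\<^esub> f y"
    "\<And>a x. a \<in> carrier R \<Longrightarrow> x \<in> A \<Longrightarrow> f (a \<odot>\<^bsub>M\<^esub> x) = a \<odot>\<^bsub>N\<^esub> f x"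
  shows "f \<in> lin_map R M A N B"
  using assms unfolding lin_map_def by auto

lemma lin_mapD:
  assumes "f \<in> lin_map R M A N B"
  shows "\<And>x. x \<in> A \<Longrightarrow> f x \<in> B"
    "\<And>x y. x \<in> A \<Longrightarrow> y \<in> A \<Longrightarrow> f (x \<oplus>\<^bsub>M\<^esub> y) = f x \<oplus>\<^bsub>N\<^esub> f y"
    "\<And>a x. a \<in> carrier R \<Longrightarrow> x \<in> A \<Longrightarrow> f (a \<odot>\<^bsub>M\<^esub> x) = a \<odot>\<^bsub>N\<^esub> f x"
  using assms unfolding lin_map_def by auto

lemma lin_map_comp:
  assumes "f \<in> lin_map R M A N B" "g \<in> lin_map R N B P C"
  shows "(\<lambda>x. g (f x)) \<in> lin_map R M A P C"
  using lin_mapD[OF assms(1)] lin_mapD[OF assms(2)] by (intro lin_mapI) auto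

lemma lin_map_mono:
  assumes "f \<in> lin_map R M A N B" "A' \<subseteq> A" "\<And>x. x \<in> A' \<Longrightarrow> f x \<in> B'"
  shows "f \<in> lin_map R M A' N B'"
  using lin_mapD[OF assms(1)] assms(2,3) by (intro lin_mapI) (auto simp: subset_iff)

lemma lin_map_codomain_mono:
  assumes "f \<in> lin_map R M A N B" "B \<subseteq> B'"
  shows "f \<in> lin_map R M A N B'"
  using lin_mapD(1)[OF assms(1)] assms(2) by (intro lin_map_mono[OF assms(1) subset_refl]) auto

lemma lin_map_restrict:
  assumes "f \<in> lin_map R M A N B"
    "\<And>x y. x \<in> A \<Longrightarrow> y \<in> A \<Longrightarrow> x \<oplus>\<^bsub>M\<^esub> y \<in> A"
    "\<And>a x. a \<in> carrier R \<Longrightarrow> x \<in> A \<Longrightarrow> a \<odot>\<^bsub>M\<^esub> x \<in> A"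
  shows "restrict f A \<in> lin_map R M A N B"
  using lin_mapD[OF assms(1)] assms(2,3) by (intro lin_mapI) auto

lemma lin_map_id: "A \<subseteq> B \<Longrightarrow> (\<lambda>x. x) \<in> lin_map R M A M B"
  by (intro lin_mapI) auto

lemma lin_map_zero:
  assumes "left_module R M" "left_module R N" "submodule A R M"
    "f \<in> lin_map R M A N B" "B \<subseteq> carrier N"
  shows "f \<zero>\<^bsub>M\<^esub> = \<zero>\<^bsub>N\<^esub>"
proof -
  interpret M: left_module R M by fact
  interpret N: left_module R N by fact
  have z: "\<zero>\<^bsub>M\<^esub> \<in> A" using M.submoduleE(2)[OF assms(3)] .
  have "f \<zero>\<^bsub>M\<^esub> = f (\<zero>\<^bsub>R\<^esub> \<odot>\<^bsub>M\<^esub> \<zero>\<^bsub>M\<^esub>)" by (simp add: M.smult_l_null)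
  also have "\<dots> = \<zero>\<^bsub>R\<^esub> \<odot>\<^bsub>N\<^esub> f \<zero>\<^bsub>M\<^esub>" using lin_mapD(3)[OF assms(4) _ z] by simp
  also have "\<dots> = \<zero>\<^bsub>N\<^esub>" using N.smult_l_null lin_mapD(1)[OF assms(4) z] assms(5) by auto
  finally show ?thesis .
qed

lemma lin_map_minus:
  assumes "left_module R M" "left_module R N" "submodule A R M"
    "f \<in> lin_map R M A N B" "B \<subseteq> carrier N" "x \<in> A"
  shows "f (\<ominus>\<^bsub>M\<^esub> x) = \<ominus>\<^bsub>N\<^esub> f x"
proof -
  interpret M: left_module R M by fact
  interpret N: left_module R N by fact
  have xM: "x \<in> carrier M" using M.submoduleE(1)[OF assms(3)] assms(6) by auto
  have fx: "f x \<in> carrier N" using lin_mapD(1)[OF assms(4) assms(6)] assms(5) by auto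
  have "f (\<ominus>\<^bsub>M\<^esub> x) = f ((\<ominus>\<^bsub>R\<^esub> \<one>\<^bsub>R\<^esub>) \<odot>\<^bsub>M\<^esub> x)" using M.smult_minus_one xM by simp
  also have "\<dots> = (\<ominus>\<^bsub>R\<^esub> \<one>\<^bsub>R\<^esub>) \<odot>\<^bsub>N\<^esub> f x" using lin_mapD(3)[OF assms(4) _ assms(6)] by simp
  also have "\<dots> = \<ominus>\<^bsub>N\<^esub> f x" using N.smult_minus_one fx by simp
  finally show ?thesis .
qed

lemma lin_map_diff:
  assumes "left_module R M" "left_module R N" "submodule A R M"
    "f \<in> lin_map R M A N B" "B \<subseteq> carrier N" "x \<in> A" "y \<in> A"
  shows "f (x \<ominus>\<^bsub>M\<^esub> y) = f x \<ominus>\<^bsub>N\<^esub> f y"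
proof -
  interpret M: left_module R M by fact
  have "\<ominus>\<^bsub>M\<^esub> y \<in> A" using M.submoduleE(4)[OF assms(3) assms(7)] .
  then show ?thesis using lin_mapD(2)[OF assms(4) assms(6)] lin_map_minus[OF assms(1-5) assms(7)]
    by (simp add: a_minus_def)
qed

lemma lin_map_inj_on_iff:
  assumes "left_module R M" "left_module R N" "submodule A R M"
    "f \<in> lin_map R M A N B" "B \<subseteq> carrier N"
  shows "inj_on f A \<longleftrightarrow> (\<forall>x\<in>A. f x = \<zero>\<^bsub>N\<^esub> \<longrightarrow> x = \<zero>\<^bsub>M\<^esub>)"
proof -
  interpret M: left_module R M by fact
  interpret N: left_module R N by fact
  note S = M.submoduleE[OF assms(3)]
  have f0: "f \<zero>\<^bsub>M\<^esub> = \<zero>\<^bsub>N\<^esub>" by (rule lin_map_zero[OF assms])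
  show ?thesis
  proof
    assume "inj_on f A" then show "\<forall>x\<in>A. f x = \<zero>\<^bsub>N\<^esub> \<longrightarrow> x = \<zero>\<^bsub>M\<^esub>"
      using f0 S(2) by (metis inj_onD)
  next
    assume ker: "\<forall>x\<in>A. f x = \<zero>\<^bsub>N\<^esub> \<longrightarrow> x = \<zero>\<^bsub>M\<^esub>"
    show "inj_on f A"
    proof (rule inj_onI)
      fix x y assume x: "x \<in> A" and y: "y \<in> A" and e: "f x = f y"
      have "f (x \<ominus>\<^bsub>M\<^esub> y) = \<zero>\<^bsub>N\<^esub>"
        using lin_map_diff[OF assms x y] e lin_mapD(1)[OF assms(4) y] assms(5)
        by (auto simp: N.r_neg a_minus_def)
      then have "x \<ominus>\<^bsub>M\<^esub> y = \<zero>\<^bsub>M\<^esub>" using ker M.submodule_diff_closed[OF assms(3) x y] by auto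
      then show "x = y" using M.diff_eq_zero_iff S(1) x y by blast
    qed
  qed
qed

lemma kernel_submodule:
  assumes "left_module R M" "left_module R N" "submodule A R M"
    "f \<in> lin_map R M A N B" "B \<subseteq> carrier N"
  shows "submodule {x\<in>A. f x = \<zero>\<^bsub>N\<^esub>} R M"
proof -
  interpret M: left_module R M by fact
  interpret N: left_module R N by fact
  note S = M.submoduleE[OF assms(3)]
  show ?thesis
    using S lin_map_zero[OF assms] lin_mapD(2,3)[OF assms(4)] lin_map_minus[OF assms]
      N.smult_r_null
    by (intro M.submoduleI) auto
qed

lemma vimage_submodule:
  assumes "left_module R M" "left_module R N" "submodule A R M"
    "f \<in> lin_map R M A N B" "B \<subseteq> carrier N" "submodule C R N"
  shows "submodule {x\<in>A. f x \<in> C} R M"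
proof -
  interpret M: left_module R M by fact
  interpret N: left_module R N by fact
  note S = M.submoduleE[OF assms(3)] and T = N.submoduleE[OF assms(6)]
  show ?thesis
    using S T lin_map_zero[OF assms(1-5)] lin_mapD(2,3)[OF assms(4)] lin_map_minus[OF assms(1-5)]
    by (intro M.submoduleI) auto
qed

lemma image_submodule:
  assumes "left_module R M" "left_module R N" "submodule A R M"
    "f \<in> lin_map R M A N B" "B \<subseteq> carrier N"
  shows "submodule (f ` A) R N"
proof -
  interpret M: left_module R M by fact
  interpret N: left_module R N by fact
  note S = M.submoduleE[OF assms(3)]
  show ?thesis
  proof (rule N.submoduleI)
    show "f ` A \<subseteq> carrier N" using lin_mapD(1)[OF assms(4)] assms(5) by auto
    show "\<zero>\<^bsub>N\<^esub> \<in> f ` A" using S lin_map_zero[OF assms] by force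
    show "x \<oplus>\<^bsub>N\<^esub> y \<in> f ` A" if "x \<in> f ` A" "y \<in> f ` A" for x y
      using that S(3) lin_mapD(2)[OF assms(4)] by (smt (verit, best) image_iff)
    show "\<ominus>\<^bsub>N\<^esub> x \<in> f ` A" if "x \<in> f ` A" for x
      using that S(4) lin_map_minus[OF assms] by (smt (verit, best) image_iff)
    show "a \<odot>\<^bsub>N\<^esub> x \<in> f ` A" if "a \<in> carrier R" "x \<in> f ` A" for a x
      using that S(5) lin_mapD(3)[OF assms(4)] by (smt (verit, best) image_iff)
  qed
qed

lemma lin_map_inv_into:
  assumes P: "left_module R P" and M: "left_module R M" and A: "submodule A R P"
    and al: "a \<in> lin_map R M (carrier M) N (carrier N)" and ai: "inj_on a (carrier M)"
    and ul: "u \<in> lin_map R P A N (carrier N)" and ui: "\<And>x. x \<in> A \<Longrightarrow> u x \<in> a ` carrier M"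
  shows "(\<lambda>x. inv_into (carrier M) a (u x)) \<in> lin_map R P A M (carrier M)"
    and "\<And>x. x \<in> A \<Longrightarrow> a (inv_into (carrier M) a (u x)) = u x"
proof -
  interpret P: left_module R P by (rule P)
  interpret M: left_module R M by (rule M)
  note SA = P.submoduleE[OF A]
  define s where "s x = inv_into (carrier M) a (u x)" for x
  have as: "a (s x) = u x" "s x \<in> carrier M" if "x \<in> A" for x
    using ui[OF that] unfolding s_def by (auto simp: f_inv_into_f inv_into_into)
  have "s \<in> lin_map R P A M (carrier M)"
  proof (rule lin_mapI)
    show "s x \<in> carrier M" if "x \<in> A" for x using as that by blast
    show "s (x \<oplus>\<^bsub>P\<^esub> y) = s x \<oplus>\<^bsub>M\<^esub> s y" if x: "x \<in> A" and y: "y \<in> A" for x y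
    proof -
      have "a (s (x \<oplus>\<^bsub>P\<^esub> y)) = a (s x \<oplus>\<^bsub>M\<^esub> s y)"
        using as x y SA(3) lin_mapD(2)[OF ul x y] lin_mapD(2)[OF al, of "s x" "s y"] by simp
      then show ?thesis using ai as x y SA(3) by (meson M.M.add.m_closed inj_onD)
    qed
    show "s (c \<odot>\<^bsub>P\<^esub> x) = c \<odot>\<^bsub>M\<^esub> s x" if c: "c \<in> carrier R" and x: "x \<in> A" for c x
    proof -
      have "a (s (c \<odot>\<^bsub>P\<^esub> x)) = a (c \<odot>\<^bsub>M\<^esub> s x)"
        using as x c SA(5) lin_mapD(3)[OF ul c x] lin_mapD(3)[OF al c, of "s x"] by simp
      then show ?thesis using ai as x c SA(5) M.smult_closed by (meson inj_onD)
    qed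
  qed
  then show "(\<lambda>x. inv_into (carrier M) a (u x)) \<in> lin_map R P A M (carrier M)" unfolding s_def .
  show "\<And>x. x \<in> A \<Longrightarrow> a (inv_into (carrier M) a (u x)) = u x" using as unfolding s_def by blast
qed

lemma embeds_trans:
  assumes "embeds R M A N B" "embeds R N B P C"
  shows "embeds R M A P C"
proof -
  obtain f g where f: "f \<in> lin_map R M A N B" "inj_on f A" and g: "g \<in> lin_map R N B P C" "inj_on g B"
    using assms unfolding embeds_def by blast
  have "f ` A \<subseteq> B" using lin_mapD(1)[OF f(1)] by blast
  then have "inj_on (\<lambda>x. g (f x)) A"
    using comp_inj_on[OF f(2) inj_on_subset[OF g(2)]] by (simp add: o_def)
  then show ?thesis unfolding embeds_def using lin_map_comp[OF f(1) g(1)] by blast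
qed

context left_module
begin

lemma End_carrier:
  "f \<in> carrier (End_ring R M) \<longleftrightarrow> f \<in> lin_map R M (carrier M) M (carrier M) \<and> f \<in> extensional (carrier M)"
  by (simp add: End_ring_def)

lemma End_lin_map: "f \<in> carrier (End_ring R M) \<Longrightarrow> f \<in> lin_map R M (carrier M) M (carrier M)"
  by (simp add: End_carrier)

lemma End_eqI:
  "f \<in> carrier (End_ring R M) \<Longrightarrow> g \<in> carrier (End_ring R M) \<Longrightarrow> (\<And>x. x \<in> carrier M \<Longrightarrow> f x = g x) \<Longrightarrow> f = g"
  unfolding End_carrier by (meson extensionalityI)

lemma End_closed: "f \<in> carrier (End_ring R M) \<Longrightarrow> x \<in> carrier M \<Longrightarrow> f x \<in> carrier M"
  by (auto simp: End_carrier dest: lin_mapD)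

lemma End_restrict_closed:
  "f \<in> lin_map R M (carrier M) M (carrier M) \<Longrightarrow> restrict f (carrier M) \<in> carrier (End_ring R M)"
  unfolding End_carrier by (auto intro: lin_map_restrict smult_closed)

lemma End_apply_mult: "x \<in> carrier M \<Longrightarrow> (f \<otimes>\<^bsub>End_ring R M\<^esub> g) x = g (f x)"
  and End_apply_add: "x \<in> carrier M \<Longrightarrow> (f \<oplus>\<^bsub>End_ring R M\<^esub> g) x = f x \<oplus>\<^bsub>M\<^esub> g x"
  and End_apply_one: "x \<in> carrier M \<Longrightarrow> \<one>\<^bsub>End_ring R M\<^esub> x = x"
  and End_apply_zero: "x \<in> carrier M \<Longrightarrow> \<zero>\<^bsub>End_ring R M\<^esub> x = \<zero>\<^bsub>M\<^esub>"
  by (simp_all add: End_ring_def compose_def)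

lemma End_add_closed:
  assumes f: "f \<in> carrier (End_ring R M)" and g: "g \<in> carrier (End_ring R M)"
  shows "f \<oplus>\<^bsub>End_ring R M\<^esub> g \<in> carrier (End_ring R M)"
proof -
  note F = lin_mapD[OF End_lin_map[OF f]] and G = lin_mapD[OF End_lin_map[OF g]]
  have "(\<lambda>x. f x \<oplus>\<^bsub>M\<^esub> g x) \<in> lin_map R M (carrier M) M (carrier M)"
  proof (rule lin_mapI)
    fix x y assume x: "x \<in> carrier M" and y: "y \<in> carrier M"
    show "f (x \<oplus>\<^bsub>M\<^esub> y) \<oplus>\<^bsub>M\<^esub> g (x \<oplus>\<^bsub>M\<^esub> y) = (f x \<oplus>\<^bsub>M\<^esub> g x) \<oplus>\<^bsub>M\<^esub> (f y \<oplus>\<^bsub>M\<^esub> g y)"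
      using F G x y by (simp add: M.a_ac)
  next
    fix a x assume a: "a \<in> carrier R" and x: "x \<in> carrier M"
    show "f (a \<odot>\<^bsub>M\<^esub> x) \<oplus>\<^bsub>M\<^esub> g (a \<odot>\<^bsub>M\<^esub> x) = a \<odot>\<^bsub>M\<^esub> (f x \<oplus>\<^bsub>M\<^esub> g x)"
      using F G a x by (simp add: smult_r_distr)
  qed (use F G in auto)
  then show ?thesis using End_restrict_closed by (simp add: End_ring_def)
qed

lemma End_mult_closed:
  "f \<in> carrier (End_ring R M) \<Longrightarrow> g \<in> carrier (End_ring R M) \<Longrightarrow> f \<otimes>\<^bsub>End_ring R M\<^esub> g \<in> carrier (End_ring R M)"
  using End_restrict_closed[OF lin_map_comp[OF End_lin_map End_lin_map]]
  by (simp add: End_ring_def compose_def)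

lemma End_one_closed: "\<one>\<^bsub>End_ring R M\<^esub> \<in> carrier (End_ring R M)"
  using End_restrict_closed[OF lin_map_id] by (simp add: End_ring_def)

lemma End_zero_closed: "\<zero>\<^bsub>End_ring R M\<^esub> \<in> carrier (End_ring R M)"
proof -
  have "(\<lambda>x. \<zero>\<^bsub>M\<^esub>) \<in> lin_map R M (carrier M) M (carrier M)"
    by (rule lin_mapI) (auto simp: smult_r_null)
  then show ?thesis using End_restrict_closed by (simp add: End_ring_def)
qed

lemma End_neg_closed:
  assumes f: "f \<in> carrier (End_ring R M)"
  shows "restrict (\<lambda>x. \<ominus>\<^bsub>M\<^esub> f x) (carrier M) \<in> carrier (End_ring R M)"
proof -
  note F = lin_mapD[OF End_lin_map[OF f]]
  have "(\<lambda>x. \<ominus>\<^bsub>M\<^esub> f x) \<in> lin_map R M (carrier M) M (carrier M)"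
    using F by (intro lin_mapI) (auto simp: M.minus_add smult_r_minus)
  then show ?thesis by (rule End_restrict_closed)
qed

lemmas End_closed_ops = End_add_closed End_mult_closed End_one_closed End_zero_closed

lemma ring_End_ring: "ring (End_ring R M)"
proof (rule ringI)
  show "abelian_group (End_ring R M)"
  proof (rule abelian_groupI)
    fix x y z
    assume x: "x \<in> carrier (End_ring R M)" and y: "y \<in> carrier (End_ring R M)"
      and z: "z \<in> carrier (End_ring R M)"
    show "x \<oplus>\<^bsub>End_ring R M\<^esub> y \<oplus>\<^bsub>End_ring R M\<^esub> z = x \<oplus>\<^bsub>End_ring R M\<^esub> (y \<oplus>\<^bsub>End_ring R M\<^esub> z)"
      by (rule End_eqI) (use x y z in \<open>auto simp: End_closed_ops End_apply_add End_closed M.a_assoc\<close>)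
    show "x \<oplus>\<^bsub>End_ring R M\<^esub> y = y \<oplus>\<^bsub>End_ring R M\<^esub> x"
      by (rule End_eqI) (use x y in \<open>auto simp: End_closed_ops End_apply_add End_closed M.a_comm\<close>)
    show "\<zero>\<^bsub>End_ring R M\<^esub> \<oplus>\<^bsub>End_ring R M\<^esub> x = x"
      by (rule End_eqI) (use x in \<open>auto simp: End_closed_ops End_apply_add End_apply_zero End_closed\<close>)
    have "restrict (\<lambda>v. \<ominus>\<^bsub>M\<^esub> x v) (carrier M) \<oplus>\<^bsub>End_ring R M\<^esub> x = \<zero>\<^bsub>End_ring R M\<^esub>"
      by (rule End_eqI)
        (use x End_neg_closed[OF x] in \<open>auto simp: End_closed_ops End_apply_add End_apply_zero End_closed M.l_neg\<close>)
    then show "\<exists>y\<in>carrier (End_ring R M). y \<oplus>\<^bsub>End_ring R M\<^esub> x = \<zero>\<^bsub>End_ring R M\<^esub>"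
      using End_neg_closed[OF x] by blast
  qed (auto simp: End_closed_ops)
next
  show "monoid (End_ring R M)"
  proof (rule monoidI)
    fix x y z
    assume x: "x \<in> carrier (End_ring R M)" and y: "y \<in> carrier (End_ring R M)"
      and z: "z \<in> carrier (End_ring R M)"
    show "x \<otimes>\<^bsub>End_ring R M\<^esub> y \<otimes>\<^bsub>End_ring R M\<^esub> z = x \<otimes>\<^bsub>End_ring R M\<^esub> (y \<otimes>\<^bsub>End_ring R M\<^esub> z)"
      by (rule End_eqI) (use x y z in \<open>auto simp: End_closed_ops End_apply_mult End_closed\<close>)
    show "\<one>\<^bsub>End_ring R M\<^esub> \<otimes>\<^bsub>End_ring R M\<^esub> x = x" "x \<otimes>\<^bsub>End_ring R M\<^esub> \<one>\<^bsub>End_ring R M\<^esub> = x"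
      by (rule End_eqI; use x in \<open>auto simp: End_closed_ops End_apply_mult End_apply_one End_closed\<close>)+
  qed (auto simp: End_closed_ops)
next
  fix x y z
  assume x: "x \<in> carrier (End_ring R M)" and y: "y \<in> carrier (End_ring R M)"
    and z: "z \<in> carrier (End_ring R M)"
  show "(x \<oplus>\<^bsub>End_ring R M\<^esub> y) \<otimes>\<^bsub>End_ring R M\<^esub> z
      = x \<otimes>\<^bsub>End_ring R M\<^esub> z \<oplus>\<^bsub>End_ring R M\<^esub> y \<otimes>\<^bsub>End_ring R M\<^esub> z"
    by (rule End_eqI)
      (use x y z lin_mapD(2)[OF End_lin_map[OF z]] in \<open>auto simp: End_closed_ops End_apply_mult End_apply_add End_closed\<close>)
  show "z \<otimes>\<^bsub>End_ring R M\<^esub> (x \<oplus>\<^bsub>End_ring R M\<^esub> y)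
      = z \<otimes>\<^bsub>End_ring R M\<^esub> x \<oplus>\<^bsub>End_ring R M\<^esub> z \<otimes>\<^bsub>End_ring R M\<^esub> y"
    by (rule End_eqI) (use x y z in \<open>auto simp: End_closed_ops End_apply_mult End_apply_add End_closed\<close>)
qed

lemma End_nonzero_iff:
  "f \<in> carrier (End_ring R M) \<Longrightarrow> f \<noteq> \<zero>\<^bsub>End_ring R M\<^esub> \<longleftrightarrow> (\<exists>x\<in>carrier M. f x \<noteq> \<zero>\<^bsub>M\<^esub>)"
  using End_eqI[OF _ End_zero_closed, of f] End_apply_zero by auto

lemma End_one_neq_zero: "nonzero_module M \<Longrightarrow> \<one>\<^bsub>End_ring R M\<^esub> \<noteq> \<zero>\<^bsub>End_ring R M\<^esub>"
  using End_nonzero_iff[OF End_one_closed] End_apply_one by (auto elim: nonzero_moduleE)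

lemma submodule_add_subgroup: "submodule N R M \<Longrightarrow> subgroup N (add_monoid M)"
  by (simp add: submodule_def)

lemma coset_eq_iff:
  assumes N: "submodule N R M" and x: "x \<in> carrier M" and y: "y \<in> carrier M"
  shows "N +>\<^bsub>M\<^esub> x = N +>\<^bsub>M\<^esub> y \<longleftrightarrow> x \<ominus>\<^bsub>M\<^esub> y \<in> N"
proof
  interpret abelian_subgroup N M
    by (rule abelian_subgroupI2[OF M.a_comm_group submodule_add_subgroup[OF N]])
  assume "N +>\<^bsub>M\<^esub> x = N +>\<^bsub>M\<^esub> y"
  then have "x \<in> N +>\<^bsub>M\<^esub> y" using a_rcos_self[OF x] by simp
  then obtain h where h: "h \<in> N" "x = h \<oplus>\<^bsub>M\<^esub> y" unfolding a_r_coset_def' by auto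
  then have "x \<ominus>\<^bsub>M\<^esub> y = h"
    using submoduleE(1)[OF N] y by (auto simp: M.minus_eq M.a_assoc M.r_neg)
  then show "x \<ominus>\<^bsub>M\<^esub> y \<in> N" using h by simp
next
  assume d: "x \<ominus>\<^bsub>M\<^esub> y \<in> N"
  have "x = (x \<ominus>\<^bsub>M\<^esub> y) \<oplus>\<^bsub>M\<^esub> y" using x y by (simp add: M.minus_eq M.a_assoc M.l_neg)
  then have "x \<in> N +>\<^bsub>M\<^esub> y" unfolding a_r_coset_def' using d by auto
  then show "N +>\<^bsub>M\<^esub> x = N +>\<^bsub>M\<^esub> y"
    using a_repr_independence[OF _ y submodule_add_subgroup[OF N]] by simp
qed

lemma coset_eq_submodule_iff:
  assumes N: "submodule N R M" and x: "x \<in> carrier M"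
  shows "N +>\<^bsub>M\<^esub> x = N \<longleftrightarrow> x \<in> N"
  using a_coset_join1[OF _ x submodule_add_subgroup[OF N]] a_coset_join2[OF x submodule_add_subgroup[OF N]]
  by blast

lemma quotient_add_coset:
  assumes N: "submodule N R M" and x: "x \<in> carrier M" and y: "y \<in> carrier M"
  shows "(N +>\<^bsub>M\<^esub> x) \<oplus>\<^bsub>quotient_module M N\<^esub> (N +>\<^bsub>M\<^esub> y) = N +>\<^bsub>M\<^esub> (x \<oplus>\<^bsub>M\<^esub> y)"
proof -
  interpret abelian_subgroup N M
    by (rule abelian_subgroupI2[OF M.a_comm_group submodule_add_subgroup[OF N]])
  show ?thesis using a_rcos_sum[OF x y] by (simp add: quotient_module_def)
qed

lemma quotient_smult_coset:
  assumes N: "submodule N R M" and a: "a \<in> carrier R" and x: "x \<in> carrier M"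
  shows "a \<odot>\<^bsub>quotient_module M N\<^esub> (N +>\<^bsub>M\<^esub> x) = N +>\<^bsub>M\<^esub> (a \<odot>\<^bsub>M\<^esub> x)"
proof -
  note S = submoduleE[OF N]
  have "set_add M N ((\<lambda>v. a \<odot>\<^bsub>M\<^esub> v) ` (N +>\<^bsub>M\<^esub> x)) = N +>\<^bsub>M\<^esub> (a \<odot>\<^bsub>M\<^esub> x)"
  proof (intro equalityI subsetI)
    fix z
    assume "z \<in> set_add M N ((\<lambda>v. a \<odot>\<^bsub>M\<^esub> v) ` (N +>\<^bsub>M\<^esub> x))"
    then obtain k h where kh: "k \<in> N" "h \<in> N" "z = k \<oplus>\<^bsub>M\<^esub> (a \<odot>\<^bsub>M\<^esub> (h \<oplus>\<^bsub>M\<^esub> x))"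
      unfolding set_add_def' a_r_coset_def' by auto
    have "h \<in> carrier M" "k \<in> carrier M" using kh S(1) by auto
    then have "z = (k \<oplus>\<^bsub>M\<^esub> a \<odot>\<^bsub>M\<^esub> h) \<oplus>\<^bsub>M\<^esub> a \<odot>\<^bsub>M\<^esub> x"
      using kh(3) a x by (simp add: smult_r_distr smult_closed M.a_assoc)
    moreover have "k \<oplus>\<^bsub>M\<^esub> a \<odot>\<^bsub>M\<^esub> h \<in> N" using S kh a by auto
    ultimately show "z \<in> N +>\<^bsub>M\<^esub> (a \<odot>\<^bsub>M\<^esub> x)" unfolding a_r_coset_def' by auto
  next
    fix z
    assume "z \<in> N +>\<^bsub>M\<^esub> (a \<odot>\<^bsub>M\<^esub> x)"
    then obtain k where k: "k \<in> N" "z = k \<oplus>\<^bsub>M\<^esub> a \<odot>\<^bsub>M\<^esub> x" unfolding a_r_coset_def' by auto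
    have "x = \<zero>\<^bsub>M\<^esub> \<oplus>\<^bsub>M\<^esub> x" using x by simp
    then have "x \<in> N +>\<^bsub>M\<^esub> x" unfolding a_r_coset_def' using S(2) by auto
    then show "z \<in> set_add M N ((\<lambda>v. a \<odot>\<^bsub>M\<^esub> v) ` (N +>\<^bsub>M\<^esub> x))"
      unfolding set_add_def' using k by blast
  qed
  then show ?thesis by (simp add: quotient_module_def)
qed

lemma coset_in_quotient:
  "submodule N R M \<Longrightarrow> x \<in> carrier M \<Longrightarrow> N +>\<^bsub>M\<^esub> x \<in> carrier (quotient_module M N)"
  using a_rcosetsI[of N x] submoduleE(1) by (simp add: quotient_module_def)

lemma quotient_elem_coset:
  "C \<in> carrier (quotient_module M N) \<Longrightarrow> \<exists>x\<in>carrier M. C = N +>\<^bsub>M\<^esub> x"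
  by (auto simp: quotient_module_def A_RCOSETS_def')

section \<open>Critically compressible and monoform modules\<close>

lemma monoform_nonzero_module: "monoform R M \<Longrightarrow> nonzero_module M"
  by (simp add: monoform_def)

lemma monoform_inj_on:
  "monoform R M \<Longrightarrow> submodule N R M \<Longrightarrow> f \<in> lin_map R M N M (carrier M) \<Longrightarrow>
    \<exists>x\<in>N. f x \<noteq> \<zero>\<^bsub>M\<^esub> \<Longrightarrow> inj_on f N"
  by (simp add: monoform_def)

lemma monoform_nonzero_image:
  assumes mono: "monoform R M" and N: "submodule N R M" and f: "f \<in> lin_map R M N M (carrier M)"
    and ex: "\<exists>x\<in>N. f x \<noteq> \<zero>\<^bsub>M\<^esub>" and y: "y \<in> N" "y \<noteq> \<zero>\<^bsub>M\<^esub>"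
  shows "f y \<noteq> \<zero>\<^bsub>M\<^esub>"
  using monoform_inj_on[OF mono N f ex] lin_map_inj_on_iff[OF left_module_axioms left_module_axioms N f subset_refl] y
  by blast

lemma image_embeds_quotient_kernel:
  assumes N: "submodule N R M" and f: "f \<in> lin_map R M N M (carrier M)"
  defines "K \<equiv> {x\<in>N. f x = \<zero>\<^bsub>M\<^esub>}"
  shows "embeds R M (f ` N) (quotient_module M K) (carrier (quotient_module M K))"
proof -
  note S = submoduleE[OF N]
  have K: "submodule K R M"
    unfolding K_def by (rule kernel_submodule[OF left_module_axioms left_module_axioms N f subset_refl])
  define pre where "pre y = (SOME n. n \<in> N \<and> f n = y)" for y
  have pre: "pre y \<in> N" "f (pre y) = y" if "y \<in> f ` N" for y
    using someI_ex[of "\<lambda>n. n \<in> N \<and> f n = y"] that unfolding pre_def by auto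
  have preM: "pre y \<in> carrier M" if "y \<in> f ` N" for y using pre(1)[OF that] S(1) by auto
  have same_fibre: "a \<ominus>\<^bsub>M\<^esub> b \<in> K" if "a \<in> N" "b \<in> N" "f a = f b" for a b
    using submodule_diff_closed[OF N that(1,2)] that lin_mapD(1)[OF f]
      lin_map_diff[OF left_module_axioms left_module_axioms N f subset_refl that(1,2)]
    by (simp add: K_def diff_eq_zero_iff)
  have fN: "submodule (f ` N) R M"
    by (rule image_submodule[OF left_module_axioms left_module_axioms N f subset_refl])
  note T = submoduleE[OF fN]
  define h where "h y = K +>\<^bsub>M\<^esub> pre y" for y
  let ?Q = "quotient_module M K"
  have "h \<in> lin_map R M (f ` N) ?Q (carrier ?Q)"
  proof (rule lin_mapI)
    show "h y \<in> carrier ?Q" if "y \<in> f ` N" for y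
      unfolding h_def using coset_in_quotient[OF K] preM that by auto
  next
    fix x y assume x: "x \<in> f ` N" and y: "y \<in> f ` N"
    have "pre (x \<oplus>\<^bsub>M\<^esub> y) \<ominus>\<^bsub>M\<^esub> (pre x \<oplus>\<^bsub>M\<^esub> pre y) \<in> K"
      using same_fibre pre[OF x] pre[OF y] pre[OF T(3)[OF x y]] S(3) lin_mapD(2)[OF f] by auto
    then show "h (x \<oplus>\<^bsub>M\<^esub> y) = h x \<oplus>\<^bsub>?Q\<^esub> h y"
      unfolding h_def using coset_eq_iff[OF K] quotient_add_coset[OF K] preM x y T(3) by simp
  next
    fix a y assume a: "a \<in> carrier R" and y: "y \<in> f ` N"
    have "pre (a \<odot>\<^bsub>M\<^esub> y) \<ominus>\<^bsub>M\<^esub> a \<odot>\<^bsub>M\<^esub> pre y \<in> K"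
      using same_fibre pre[OF y] pre[OF T(5)[OF a y]] S(5)[OF a] lin_mapD(3)[OF f a] by auto
    then show "h (a \<odot>\<^bsub>M\<^esub> y) = a \<odot>\<^bsub>?Q\<^esub> h y"
      unfolding h_def using coset_eq_iff[OF K] quotient_smult_coset[OF K a] preM y T(5)[OF a] a smult_closed
      by simp
  qed
  moreover have "inj_on h (f ` N)"
  proof (rule inj_onI)
    fix x y assume x: "x \<in> f ` N" and y: "y \<in> f ` N" and "h x = h y"
    then have "pre x \<ominus>\<^bsub>M\<^esub> pre y \<in> K" unfolding h_def using coset_eq_iff[OF K] preM by simp
    then have "f (pre x) \<ominus>\<^bsub>M\<^esub> f (pre y) = \<zero>\<^bsub>M\<^esub>"
      using lin_map_diff[OF left_module_axioms left_module_axioms N f subset_refl] pre[OF x] pre[OF y]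
      by (simp add: K_def)
    then show "x = y" using diff_eq_zero_iff pre[OF x] pre[OF y] T(1) x y by auto
  qed
  ultimately show ?thesis unfolding embeds_def by blast
qed

lemma critically_compressible_imp_monoform:
  assumes cc: "critically_compressible R M"
  shows "monoform R M"
  unfolding monoform_def
proof (intro conjI allI impI)
  have comp: "compressible R M" using cc by (simp add: critically_compressible_def)
  then show "nonzero_module M" by (simp add: compressible_def)
  fix N f
  assume N: "submodule N R M" and f: "f \<in> lin_map R M N M (carrier M)" and ex: "\<exists>x\<in>N. f x \<noteq> \<zero>\<^bsub>M\<^esub>"
  define K where "K = {x\<in>N. f x = \<zero>\<^bsub>M\<^esub>}"
  show "inj_on f N"
  proof (rule ccontr)
    assume "\<not> inj_on f N"
    then have "K \<noteq> {\<zero>\<^bsub>M\<^esub>}"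
      using lin_map_inj_on_iff[OF left_module_axioms left_module_axioms N f subset_refl] K_def by auto
    then have "nonzero_submodule R M K" unfolding nonzero_submodule_def K_def
      using kernel_submodule[OF left_module_axioms left_module_axioms N f subset_refl] by blast
    moreover have "embeds R M (carrier M) M (f ` N)"
      using comp ex image_submodule[OF left_module_axioms left_module_axioms N f subset_refl]
      unfolding compressible_def nonzero_submodule_def by auto
    then have "embeds R M (carrier M) (quotient_module M K) (carrier (quotient_module M K))"
      using embeds_trans image_embeds_quotient_kernel[OF N f] unfolding K_def by blast
    ultimately show False using cc unfolding critically_compressible_def by blast
  qed
qed

lemma quotient_embedding_zero:
  assumes N: "submodule N R M"
    and h: "h \<in> lin_map R M (carrier M) (quotient_module M N) (carrier (quotient_module M N))"
  shows "h \<zero>\<^bsub>M\<^esub> = N"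
proof -
  obtain x where x: "x \<in> carrier M" "h \<zero>\<^bsub>M\<^esub> = N +>\<^bsub>M\<^esub> x"
    using quotient_elem_coset[OF lin_mapD(1)[OF h M.zero_closed]] by blast
  have "h \<zero>\<^bsub>M\<^esub> = h (\<zero>\<^bsub>R\<^esub> \<odot>\<^bsub>M\<^esub> \<zero>\<^bsub>M\<^esub>)" by (simp add: smult_l_null)
  also have "\<dots> = N +>\<^bsub>M\<^esub> (\<zero>\<^bsub>R\<^esub> \<odot>\<^bsub>M\<^esub> x)"
    using lin_mapD(3)[OF h] x quotient_smult_coset[OF N R.zero_closed x(1)] by simp
  also have "\<dots> = N" using coset_eq_submodule_iff[OF N] submoduleE(2)[OF N] x(1) by (simp add: smult_l_null)
  finally show ?thesis .
qed

lemma coset_vimage_image_submodule: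
  assumes N: "submodule N R M"
    and h: "h \<in> lin_map R M (carrier M) (quotient_module M N) (carrier (quotient_module M N))"
  defines "L \<equiv> {x\<in>carrier M. N +>\<^bsub>M\<^esub> x \<in> h ` carrier M}"
  shows "submodule L R M" and "N \<subseteq> L"
proof -
  note S = submoduleE[OF N]
  have smult: "a \<odot>\<^bsub>M\<^esub> x \<in> L" if a: "a \<in> carrier R" and x: "x \<in> L" for a x
  proof -
    obtain m where m: "m \<in> carrier M" "N +>\<^bsub>M\<^esub> x = h m" using x by (auto simp: L_def)
    have "N +>\<^bsub>M\<^esub> (a \<odot>\<^bsub>M\<^esub> x) = a \<odot>\<^bsub>quotient_module M N\<^esub> (N +>\<^bsub>M\<^esub> x)"
      using quotient_smult_coset[OF N a] x by (simp add: L_def)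
    also have "\<dots> = h (a \<odot>\<^bsub>M\<^esub> m)" by (simp only: m(2) lin_mapD(3)[OF h a m(1)])
    finally have "N +>\<^bsub>M\<^esub> (a \<odot>\<^bsub>M\<^esub> x) = h (a \<odot>\<^bsub>M\<^esub> m)" .
    then show ?thesis using a x m(1) smult_closed by (auto simp: L_def)
  qed
  have add: "x \<oplus>\<^bsub>M\<^esub> y \<in> L" if x: "x \<in> L" and y: "y \<in> L" for x y
  proof -
    obtain m m' where m: "m \<in> carrier M" "N +>\<^bsub>M\<^esub> x = h m" "m' \<in> carrier M" "N +>\<^bsub>M\<^esub> y = h m'"
      using x y by (auto simp: L_def)
    have "N +>\<^bsub>M\<^esub> (x \<oplus>\<^bsub>M\<^esub> y) = (N +>\<^bsub>M\<^esub> x) \<oplus>\<^bsub>quotient_module M N\<^esub> (N +>\<^bsub>M\<^esub> y)"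
      using quotient_add_coset[OF N] x y by (simp add: L_def)
    also have "\<dots> = h (m \<oplus>\<^bsub>M\<^esub> m')" by (simp only: m(2,4) lin_mapD(2)[OF h m(1,3)])
    finally have "N +>\<^bsub>M\<^esub> (x \<oplus>\<^bsub>M\<^esub> y) = h (m \<oplus>\<^bsub>M\<^esub> m')" .
    then show ?thesis using x y m by (auto simp: L_def)
  qed
  show NL: "N \<subseteq> L"
  proof
    fix n assume n: "n \<in> N"
    have "N +>\<^bsub>M\<^esub> n = N" using coset_eq_submodule_iff[OF N] n S(1) by blast
    then have "N +>\<^bsub>M\<^esub> n \<in> h ` carrier M"
      using quotient_embedding_zero[OF N h] M.zero_closed by (metis image_eqI)
    then show "n \<in> L" using n S(1) unfolding L_def by blast
  qed
  show "submodule L R M"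
  proof (rule submoduleI)
    show "L \<subseteq> carrier M" "\<zero>\<^bsub>M\<^esub> \<in> L" using NL S(2) by (auto simp: L_def)
    show "x \<oplus>\<^bsub>M\<^esub> y \<in> L" if "x \<in> L" "y \<in> L" for x y using add that by blast
    show "a \<odot>\<^bsub>M\<^esub> x \<in> L" if "a \<in> carrier R" "x \<in> L" for a x using smult that by blast
    show "\<ominus>\<^bsub>M\<^esub> x \<in> L" if x: "x \<in> L" for x
      using smult[OF R.a_inv_closed[OF R.one_closed] x] x smult_minus_one by (auto simp: L_def)
  qed
qed

text \<open>g = h\<inverse> \<circ> \<pi> on L = \<pi>\<inverse>(h(M)), where \<pi> : M \<rightarrow> M/N is the projection.\<close>
lemma quotient_embedding_pullback:
  assumes N: "submodule N R M"
    and h: "h \<in> lin_map R M (carrier M) (quotient_module M N) (carrier (quotient_module M N))"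
    and inj: "inj_on h (carrier M)"
  obtains L g where "submodule L R M" "N \<subseteq> L" "g \<in> lin_map R M L M (carrier M)"
    "\<And>n. n \<in> N \<Longrightarrow> g n = \<zero>\<^bsub>M\<^esub>" "carrier M \<subseteq> g ` L"
proof -
  define L where "L = {x\<in>carrier M. N +>\<^bsub>M\<^esub> x \<in> h ` carrier M}"
  note L = coset_vimage_image_submodule[OF N h, folded L_def]
  define g where "g x = inv_into (carrier M) h (N +>\<^bsub>M\<^esub> x)" for x
  have hg: "h (g x) = N +>\<^bsub>M\<^esub> x" "g x \<in> carrier M" if "x \<in> L" for x
    using that by (simp_all add: L_def g_def f_inv_into_f inv_into_into)
  have gh: "g x = m" if "m \<in> carrier M" "h m = N +>\<^bsub>M\<^esub> x" for x m
    using that inj unfolding g_def by (metis inv_into_f_f)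
  have LM: "x \<in> carrier M" if "x \<in> L" for x using that by (simp add: L_def)
  have "g \<in> lin_map R M L M (carrier M)"
  proof (rule lin_mapI)
    show "g (x \<oplus>\<^bsub>M\<^esub> y) = g x \<oplus>\<^bsub>M\<^esub> g y" if x: "x \<in> L" and y: "y \<in> L" for x y
      using gh[of "g x \<oplus>\<^bsub>M\<^esub> g y" "x \<oplus>\<^bsub>M\<^esub> y"] lin_mapD(2)[OF h hg(2)[OF x] hg(2)[OF y]]
        hg[OF x] hg[OF y] quotient_add_coset[OF N LM[OF x] LM[OF y]] by simp
    show "g (a \<odot>\<^bsub>M\<^esub> x) = a \<odot>\<^bsub>M\<^esub> g x" if a: "a \<in> carrier R" and x: "x \<in> L" for a x
      using gh[of "a \<odot>\<^bsub>M\<^esub> g x" "a \<odot>\<^bsub>M\<^esub> x"] lin_mapD(3)[OF h a hg(2)[OF x]]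
        hg[OF x] quotient_smult_coset[OF N a LM[OF x]] a smult_closed by simp
    show "g x \<in> carrier M" if "x \<in> L" for x using hg(2)[OF that] .
  qed
  moreover have "g n = \<zero>\<^bsub>M\<^esub>" if n: "n \<in> N" for n
  proof -
    have "N +>\<^bsub>M\<^esub> n = N" using coset_eq_submodule_iff[OF N] n submoduleE(1)[OF N] by blast
    then show ?thesis using gh[OF M.zero_closed] quotient_embedding_zero[OF N h] by simp
  qed
  moreover have "carrier M \<subseteq> g ` L"
  proof
    fix m assume m: "m \<in> carrier M"
    obtain x where x: "x \<in> carrier M" "h m = N +>\<^bsub>M\<^esub> x"
      using quotient_elem_coset[OF lin_mapD(1)[OF h m]] by blast
    then have "x \<in> L" unfolding L_def using m by blast
    then show "m \<in> g ` L" using gh[OF m x(2)] by blast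
  qed
  ultimately show thesis using L by (intro that)
qed

lemma compressible_monoform_imp_critically_compressible:
  assumes comp: "compressible R M" and mono: "monoform R M"
  shows "critically_compressible R M"
  unfolding critically_compressible_def
proof (intro conjI comp allI impI notI)
  fix N assume N: "nonzero_submodule R M N"
    and "embeds R M (carrier M) (quotient_module M N) (carrier (quotient_module M N))"
  then obtain h where h: "h \<in> lin_map R M (carrier M) (quotient_module M N) (carrier (quotient_module M N))"
      and inj: "inj_on h (carrier M)"
    unfolding embeds_def by blast
  have Ns: "submodule N R M" using N by (simp add: nonzero_submodule_def)
  obtain L g where L: "submodule L R M" "N \<subseteq> L" and g: "g \<in> lin_map R M L M (carrier M)"
    and gN: "\<And>n. n \<in> N \<Longrightarrow> g n = \<zero>\<^bsub>M\<^esub>" and onto: "carrier M \<subseteq> g ` L"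
    by (rule quotient_embedding_pullback[OF Ns h inj]) blast
  obtain m where m: "m \<in> carrier M" "m \<noteq> \<zero>\<^bsub>M\<^esub>"
    using monoform_nonzero_module[OF mono] by (rule nonzero_moduleE)
  obtain x where "x \<in> L" "g x = m" using onto m(1) by blast
  then have ex: "\<exists>x\<in>L. g x \<noteq> \<zero>\<^bsub>M\<^esub>" using m(2) by blast
  obtain n where n: "n \<in> N" "n \<noteq> \<zero>\<^bsub>M\<^esub>" using N by (rule nonzero_submoduleE)
  then have "g n \<noteq> \<zero>\<^bsub>M\<^esub>" using monoform_nonzero_image[OF mono L(1) g ex] L(2) by blast
  then show False using gN[OF n(1)] by contradiction
qed

lemma critically_compressible_iff_compressible_monoform:
  "critically_compressible R M \<longleftrightarrow> compressible R M \<and> monoform R M"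
proof
  assume "critically_compressible R M"
  then show "compressible R M \<and> monoform R M"
    using critically_compressible_imp_monoform critically_compressible_def by blast
qed (use compressible_monoform_imp_critically_compressible in blast)

lemma submodule_sum:
  assumes A: "submodule A R M" and B: "submodule B R M"
  shows "submodule {a \<oplus>\<^bsub>M\<^esub> b | a b. a \<in> A \<and> b \<in> B} R M"
proof -
  note SA = submoduleE[OF A] and SB = submoduleE[OF B]
  have AM: "a \<in> carrier M" if "a \<in> A" for a using that SA(1) by blast
  have BM: "b \<in> carrier M" if "b \<in> B" for b using that SB(1) by blast
  show ?thesis
  proof (rule submoduleI)
    show "\<zero>\<^bsub>M\<^esub> \<in> {a \<oplus>\<^bsub>M\<^esub> b | a b. a \<in> A \<and> b \<in> B}" using SA(2) SB(2) by force
    show "x \<oplus>\<^bsub>M\<^esub> y \<in> {a \<oplus>\<^bsub>M\<^esub> b | a b. a \<in> A \<and> b \<in> B}"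
      if xy: "x \<in> {a \<oplus>\<^bsub>M\<^esub> b | a b. a \<in> A \<and> b \<in> B}" "y \<in> {a \<oplus>\<^bsub>M\<^esub> b | a b. a \<in> A \<and> b \<in> B}" for x y
    proof -
      obtain a b a' b' where "x = a \<oplus>\<^bsub>M\<^esub> b" "y = a' \<oplus>\<^bsub>M\<^esub> b'" "a \<in> A" "b \<in> B" "a' \<in> A" "b' \<in> B"
        using xy by auto
      moreover then have "x \<oplus>\<^bsub>M\<^esub> y = (a \<oplus>\<^bsub>M\<^esub> a') \<oplus>\<^bsub>M\<^esub> (b \<oplus>\<^bsub>M\<^esub> b')"
        by (auto simp: M.a_ac AM BM)
      ultimately show ?thesis using SA(3) SB(3) by blast
    qed
    show "\<ominus>\<^bsub>M\<^esub> x \<in> {a \<oplus>\<^bsub>M\<^esub> b | a b. a \<in> A \<and> b \<in> B}"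
      if x: "x \<in> {a \<oplus>\<^bsub>M\<^esub> b | a b. a \<in> A \<and> b \<in> B}" for x
    proof -
      obtain a b where "x = a \<oplus>\<^bsub>M\<^esub> b" "a \<in> A" "b \<in> B" using x by auto
      moreover then have "\<ominus>\<^bsub>M\<^esub> x = (\<ominus>\<^bsub>M\<^esub> a) \<oplus>\<^bsub>M\<^esub> (\<ominus>\<^bsub>M\<^esub> b)"
        by (auto simp: M.minus_add M.a_comm AM BM)
      ultimately show ?thesis using SA(4) SB(4) by blast
    qed
    show "c \<odot>\<^bsub>M\<^esub> x \<in> {a \<oplus>\<^bsub>M\<^esub> b | a b. a \<in> A \<and> b \<in> B}"
      if c: "c \<in> carrier R" and x: "x \<in> {a \<oplus>\<^bsub>M\<^esub> b | a b. a \<in> A \<and> b \<in> B}" for c x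
    proof -
      obtain a b where "x = a \<oplus>\<^bsub>M\<^esub> b" "a \<in> A" "b \<in> B" using x by auto
      moreover then have "c \<odot>\<^bsub>M\<^esub> x = (c \<odot>\<^bsub>M\<^esub> a) \<oplus>\<^bsub>M\<^esub> (c \<odot>\<^bsub>M\<^esub> b)"
        using c by (auto simp: smult_r_distr AM BM)
      ultimately show ?thesis using SA(5) SB(5) c by blast
    qed
  qed (use AM BM in auto)
qed

lemma direct_sum_projection:
  assumes A: "submodule A R M" and B: "submodule B R M" and disj: "A \<inter> B \<subseteq> {\<zero>\<^bsub>M\<^esub>}"
  obtains p where "p \<in> lin_map R M {a \<oplus>\<^bsub>M\<^esub> b | a b. a \<in> A \<and> b \<in> B} M (carrier M)"
    "\<And>a b. a \<in> A \<Longrightarrow> b \<in> B \<Longrightarrow> p (a \<oplus>\<^bsub>M\<^esub> b) = a"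
proof -
  note SA = submoduleE[OF A] and SB = submoduleE[OF B]
  have AM: "a \<in> carrier M" if "a \<in> A" for a using that SA(1) by blast
  have BM: "b \<in> carrier M" if "b \<in> B" for b using that SB(1) by blast
  have unique: "a = a'" if "a \<in> A" "a' \<in> A" "b \<in> B" "b' \<in> B" "a \<oplus>\<^bsub>M\<^esub> b = a' \<oplus>\<^bsub>M\<^esub> b'" for a a' b b'
  proof -
    have "b \<ominus>\<^bsub>M\<^esub> b' = a' \<ominus>\<^bsub>M\<^esub> a"
      using add_eq_add_iff_diff_eq[of a b a' b'] that AM BM by simp
    moreover have "a' \<ominus>\<^bsub>M\<^esub> a \<in> A" "b \<ominus>\<^bsub>M\<^esub> b' \<in> B"
      using submodule_diff_closed[OF A] submodule_diff_closed[OF B] that by auto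
    ultimately show ?thesis using disj diff_eq_zero_iff AM that(1,2) by auto
  qed
  define p where "p s = (SOME a. a \<in> A \<and> (\<exists>b\<in>B. s = a \<oplus>\<^bsub>M\<^esub> b))" for s
  have p: "p (a \<oplus>\<^bsub>M\<^esub> b) = a" if "a \<in> A" "b \<in> B" for a b
  proof -
    have "p (a \<oplus>\<^bsub>M\<^esub> b) \<in> A \<and> (\<exists>b'\<in>B. a \<oplus>\<^bsub>M\<^esub> b = p (a \<oplus>\<^bsub>M\<^esub> b) \<oplus>\<^bsub>M\<^esub> b')"
      unfolding p_def by (rule someI_ex) (use that in blast)
    then show ?thesis using unique that by metis
  qed
  have "p \<in> lin_map R M {a \<oplus>\<^bsub>M\<^esub> b | a b. a \<in> A \<and> b \<in> B} M (carrier M)"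
  proof (rule lin_mapI)
    show "p x \<in> carrier M" if "x \<in> {a \<oplus>\<^bsub>M\<^esub> b | a b. a \<in> A \<and> b \<in> B}" for x
      using that p AM by auto
    show "p (x \<oplus>\<^bsub>M\<^esub> y) = p x \<oplus>\<^bsub>M\<^esub> p y"
      if xy: "x \<in> {a \<oplus>\<^bsub>M\<^esub> b | a b. a \<in> A \<and> b \<in> B}" "y \<in> {a \<oplus>\<^bsub>M\<^esub> b | a b. a \<in> A \<and> b \<in> B}" for x y
    proof -
      obtain a b a' b' where ab: "x = a \<oplus>\<^bsub>M\<^esub> b" "y = a' \<oplus>\<^bsub>M\<^esub> b'" "a \<in> A" "b \<in> B" "a' \<in> A" "b' \<in> B"
        using xy by auto
      then have "x \<oplus>\<^bsub>M\<^esub> y = (a \<oplus>\<^bsub>M\<^esub> a') \<oplus>\<^bsub>M\<^esub> (b \<oplus>\<^bsub>M\<^esub> b')" by (auto simp: M.a_ac AM BM)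
      then show ?thesis using ab p SA(3) SB(3) by simp
    qed
    show "p (c \<odot>\<^bsub>M\<^esub> x) = c \<odot>\<^bsub>M\<^esub> p x"
      if c: "c \<in> carrier R" and x: "x \<in> {a \<oplus>\<^bsub>M\<^esub> b | a b. a \<in> A \<and> b \<in> B}" for c x
    proof -
      obtain a b where ab: "x = a \<oplus>\<^bsub>M\<^esub> b" "a \<in> A" "b \<in> B" using x by auto
      then have "c \<odot>\<^bsub>M\<^esub> x = (c \<odot>\<^bsub>M\<^esub> a) \<oplus>\<^bsub>M\<^esub> (c \<odot>\<^bsub>M\<^esub> b)" using c by (auto simp: smult_r_distr AM BM)
      then show ?thesis using ab p SA(5) SB(5) c by simp
    qed
  qed
  then show thesis using that p by blast
qed

text \<open>A monoform module is uniform: the projection of A + B onto A would be a nonzero map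
  with nonzero kernel B.\<close>
lemma monoform_uniform:
  assumes mono: "monoform R M" and A: "nonzero_submodule R M A" and B: "nonzero_submodule R M B"
  shows "\<exists>x\<in>A \<inter> B. x \<noteq> \<zero>\<^bsub>M\<^esub>"
proof (rule ccontr)
  assume "\<not> (\<exists>x\<in>A \<inter> B. x \<noteq> \<zero>\<^bsub>M\<^esub>)"
  then have disj: "A \<inter> B \<subseteq> {\<zero>\<^bsub>M\<^esub>}" by blast
  have As: "submodule A R M" and Bs: "submodule B R M" using A B by (auto simp: nonzero_submodule_def)
  obtain p where p: "p \<in> lin_map R M {a \<oplus>\<^bsub>M\<^esub> b | a b. a \<in> A \<and> b \<in> B} M (carrier M)"
    and pab: "\<And>a b. a \<in> A \<Longrightarrow> b \<in> B \<Longrightarrow> p (a \<oplus>\<^bsub>M\<^esub> b) = a"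
    by (rule direct_sum_projection[OF As Bs disj]) blast
  obtain a where a: "a \<in> A" "a \<noteq> \<zero>\<^bsub>M\<^esub>" using A by (rule nonzero_submoduleE)
  obtain b where b: "b \<in> B" "b \<noteq> \<zero>\<^bsub>M\<^esub>" using B by (rule nonzero_submoduleE)
  have AM: "A \<subseteq> carrier M" and BM: "B \<subseteq> carrier M" using As Bs submoduleE(1) by auto
  have "a \<oplus>\<^bsub>M\<^esub> \<zero>\<^bsub>M\<^esub> = a" "\<zero>\<^bsub>M\<^esub> \<oplus>\<^bsub>M\<^esub> b = b" using a b AM BM by auto
  then have ab: "a \<in> {a \<oplus>\<^bsub>M\<^esub> b | a b. a \<in> A \<and> b \<in> B}" "p a = a"
    and bb: "b \<in> {a \<oplus>\<^bsub>M\<^esub> b | a b. a \<in> A \<and> b \<in> B}" "p b = \<zero>\<^bsub>M\<^esub>"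
    using pab[of a "\<zero>\<^bsub>M\<^esub>"] pab[of "\<zero>\<^bsub>M\<^esub>" b] a b submoduleE(2)[OF As] submoduleE(2)[OF Bs]
    by (metis (mono_tags, lifting) mem_Collect_eq)+
  have "\<exists>x\<in>{a \<oplus>\<^bsub>M\<^esub> b | a b. a \<in> A \<and> b \<in> B}. p x \<noteq> \<zero>\<^bsub>M\<^esub>"
    by (rule bexI[OF _ ab(1)]) (simp add: ab(2) a(2))
  then have "p b \<noteq> \<zero>\<^bsub>M\<^esub>" using monoform_nonzero_image[OF mono submodule_sum[OF As Bs] p _ bb(1) b(2)] by blast
  then show False using bb(2) by contradiction
qed

section \<open>Endomorphism rings of compressible monoform modules\<close>

lemma End_restrict_into_submodule:
  "f \<in> lin_map R M (carrier M) M N \<Longrightarrow> submodule N R M \<Longrightarrow> restrict f (carrier M) \<in> carrier (End_ring R M)"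
  using End_restrict_closed lin_map_codomain_mono submoduleE(1) by blast

lemma End_lift:
  assumes a: "a \<in> carrier (End_ring R M)" "inj_on a (carrier M)"
    and u: "u \<in> carrier (End_ring R M)" "\<And>x. x \<in> carrier M \<Longrightarrow> u x \<in> a ` carrier M"
  obtains s where "s \<in> carrier (End_ring R M)" "s \<otimes>\<^bsub>End_ring R M\<^esub> a = u"
proof -
  note inv = lin_map_inv_into[OF left_module_axioms left_module_axioms carrier_is_submodule
      End_lin_map[OF a(1)] a(2) End_lin_map[OF u(1)] u(2)]
  define s where "s = restrict (\<lambda>x. inv_into (carrier M) a (u x)) (carrier M)"
  have s: "s \<in> carrier (End_ring R M)" unfolding s_def by (rule End_restrict_closed[OF inv(1)])
  moreover have "s \<otimes>\<^bsub>End_ring R M\<^esub> a = u"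
    by (rule End_eqI[OF End_mult_closed[OF s a(1)] u(1)]) (simp add: End_apply_mult s_def inv(2))
  ultimately show thesis by (rule that)
qed

lemma monoform_End_apply_nonzero:
  assumes mono: "monoform R M" and f: "f \<in> carrier (End_ring R M)" "f \<noteq> \<zero>\<^bsub>End_ring R M\<^esub>"
    and y: "y \<in> carrier M" "y \<noteq> \<zero>\<^bsub>M\<^esub>"
  shows "f y \<noteq> \<zero>\<^bsub>M\<^esub>"
  using monoform_nonzero_image[OF mono carrier_is_submodule End_lin_map[OF f(1)] _ y] End_nonzero_iff[OF f(1)] f(2)
  by blast

lemma monoform_End_inj_on:
  assumes mono: "monoform R M" and f: "f \<in> carrier (End_ring R M)" "f \<noteq> \<zero>\<^bsub>End_ring R M\<^esub>"
  shows "inj_on f (carrier M)"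
  using monoform_inj_on[OF mono carrier_is_submodule End_lin_map[OF f(1)]] End_nonzero_iff[OF f(1)] f(2)
  by blast

lemma monoform_End_nc_domain:
  assumes mono: "monoform R M"
  shows "nc_domain (End_ring R M)"
  unfolding nc_domain_def
proof (intro conjI ballI impI ring_End_ring End_one_neq_zero[OF monoform_nonzero_module[OF mono]])
  fix a b assume a: "a \<in> carrier (End_ring R M)" and b: "b \<in> carrier (End_ring R M)"
    and ab: "a \<otimes>\<^bsub>End_ring R M\<^esub> b = \<zero>\<^bsub>End_ring R M\<^esub>"
  obtain m where m: "m \<in> carrier M" "m \<noteq> \<zero>\<^bsub>M\<^esub>" using monoform_nonzero_module[OF mono] by (rule nonzero_moduleE)
  show "a = \<zero>\<^bsub>End_ring R M\<^esub> \<or> b = \<zero>\<^bsub>End_ring R M\<^esub>"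
  proof (rule ccontr)
    assume "\<not> (a = \<zero>\<^bsub>End_ring R M\<^esub> \<or> b = \<zero>\<^bsub>End_ring R M\<^esub>)"
    then have "b (a m) \<noteq> \<zero>\<^bsub>M\<^esub>"
      using monoform_End_apply_nonzero[OF mono] a b m End_closed by blast
    then show False using ab End_apply_mult[OF m(1), of a b] End_apply_zero[OF m(1)] by simp
  qed
qed

text \<open>The Ore condition: a(M) \<inter> b(M) is nonzero by uniformity, so M embeds into it by u,
  and u factors through both a and b.\<close>
lemma compressible_monoform_imp_left_ore_domain:
  assumes comp: "compressible R M" and mono: "monoform R M"
  shows "left_ore_domain (End_ring R M)"
  unfolding left_ore_domain_def
proof (intro conjI ballI monoform_End_nc_domain[OF mono])
  let ?E = "End_ring R M"
  fix a b assume "a \<in> carrier ?E - {\<zero>\<^bsub>?E\<^esub>}" "b \<in> carrier ?E - {\<zero>\<^bsub>?E\<^esub>}"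
  then have a: "a \<in> carrier ?E" "a \<noteq> \<zero>\<^bsub>?E\<^esub>" and b: "b \<in> carrier ?E" "b \<noteq> \<zero>\<^bsub>?E\<^esub>" by auto
  obtain m where m: "m \<in> carrier M" "m \<noteq> \<zero>\<^bsub>M\<^esub>" using monoform_nonzero_module[OF mono] by (rule nonzero_moduleE)
  have image: "nonzero_submodule R M (f ` carrier M)" if "f \<in> carrier ?E" "f \<noteq> \<zero>\<^bsub>?E\<^esub>" for f
    unfolding nonzero_submodule_def
    using image_submodule[OF left_module_axioms left_module_axioms carrier_is_submodule End_lin_map[OF that(1)] subset_refl]
      monoform_End_apply_nonzero[OF mono that m] m(1) by auto
  define C where "C = a ` carrier M \<inter> b ` carrier M"
  have Cs: "submodule C R M" unfolding C_def using image[OF a] image[OF b]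
    by (simp add: submodule_Int nonzero_submodule_def)
  then have "nonzero_submodule R M C"
    using monoform_uniform[OF mono image[OF a] image[OF b]] submoduleE(2)[OF Cs]
    unfolding nonzero_submodule_def C_def by blast
  then obtain u where ul: "u \<in> lin_map R M (carrier M) M C" and ui: "inj_on u (carrier M)"
    using comp unfolding compressible_def embeds_def by blast
  define u' where "u' = restrict u (carrier M)"
  have u': "u' \<in> carrier ?E" unfolding u'_def by (rule End_restrict_into_submodule[OF ul Cs])
  have uC: "u' x \<in> C" if "x \<in> carrier M" for x using lin_mapD(1)[OF ul that] that by (simp add: u'_def)
  obtain s where s: "s \<in> carrier ?E" "s \<otimes>\<^bsub>?E\<^esub> a = u'"
    by (rule End_lift[OF a(1) monoform_End_inj_on[OF mono a] u']) (use uC C_def in auto)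
  obtain t where t: "t \<in> carrier ?E" "t \<otimes>\<^bsub>?E\<^esub> b = u'"
    by (rule End_lift[OF b(1) monoform_End_inj_on[OF mono b] u']) (use uC C_def in auto)
  have "u' m \<noteq> \<zero>\<^bsub>M\<^esub>"
    using lin_map_inj_on_iff[OF left_module_axioms left_module_axioms carrier_is_submodule
        lin_map_codomain_mono[OF ul submoduleE(1)[OF Cs]] subset_refl] ui m by (auto simp: u'_def)
  then have "u' \<noteq> \<zero>\<^bsub>?E\<^esub>" using End_nonzero_iff[OF u'] m(1) by blast
  then show "\<exists>s\<in>carrier ?E. \<exists>t\<in>carrier ?E. s \<otimes>\<^bsub>?E\<^esub> a = t \<otimes>\<^bsub>?E\<^esub> b \<and> s \<otimes>\<^bsub>?E\<^esub> a \<noteq> \<zero>\<^bsub>?E\<^esub>"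
    using s t by metis
qed

lemma compressible_monoform_imp_fully_retractable:
  assumes comp: "compressible R M" and mono: "monoform R M"
  shows "fully_retractable R M"
  unfolding fully_retractable_def
proof (intro allI impI)
  fix N g assume N: "nonzero_submodule R M N" and g: "g \<in> lin_map R M N M (carrier M)"
    and ex: "\<exists>y\<in>N. g y \<noteq> \<zero>\<^bsub>M\<^esub>"
  have Ns: "submodule N R M" using N by (simp add: nonzero_submodule_def)
  obtain u where u: "u \<in> lin_map R M (carrier M) M N" and ui: "inj_on u (carrier M)"
    using comp N unfolding compressible_def embeds_def by blast
  obtain m where m: "m \<in> carrier M" "m \<noteq> \<zero>\<^bsub>M\<^esub>" using monoform_nonzero_module[OF mono] by (rule nonzero_moduleE)
  have "u m \<noteq> \<zero>\<^bsub>M\<^esub>"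
    using lin_map_inj_on_iff[OF left_module_axioms left_module_axioms carrier_is_submodule
        lin_map_codomain_mono[OF u submoduleE(1)[OF Ns]] subset_refl] ui m by blast
  then have "g (u m) \<noteq> \<zero>\<^bsub>M\<^esub>" using monoform_nonzero_image[OF mono Ns g ex] lin_mapD(1)[OF u m(1)] by blast
  then show "\<exists>h\<in>lin_map R M (carrier M) M N. \<exists>x\<in>carrier M. g (h x) \<noteq> \<zero>\<^bsub>M\<^esub>" using u m by blast
qed

lemma fully_retractable_imp_retractable:
  assumes fr: "fully_retractable R M"
  shows "retractable R M"
  unfolding retractable_def
proof (intro allI impI)
  fix N assume N: "nonzero_submodule R M N"
  have "(\<lambda>x. x) \<in> lin_map R M N M (carrier M)"
    using N submoduleE(1) by (intro lin_map_id) (auto simp: nonzero_submodule_def)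
  moreover obtain y where "y \<in> N" "y \<noteq> \<zero>\<^bsub>M\<^esub>" using N by (rule nonzero_submoduleE)
  ultimately show "\<exists>f\<in>lin_map R M (carrier M) M N. \<exists>x\<in>carrier M. f x \<noteq> \<zero>\<^bsub>M\<^esub>"
    using fr N unfolding fully_retractable_def by blast
qed

lemma left_ore_domain_End_imp_nonzero_module:
  assumes "left_ore_domain (End_ring R M)"
  shows "nonzero_module M"
proof -
  have "\<one>\<^bsub>End_ring R M\<^esub> \<noteq> \<zero>\<^bsub>End_ring R M\<^esub>"
    using assms by (simp add: left_ore_domain_def nc_domain_def)
  then show ?thesis
    using End_nonzero_iff[OF End_one_closed] End_apply_one unfolding nonzero_module_def by auto
qed

lemma retractable_monoform_imp_compressible:
  assumes r: "retractable R M" and mono: "monoform R M"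
  shows "compressible R M"
  unfolding compressible_def
proof (intro conjI allI impI monoform_nonzero_module[OF mono])
  fix N assume N: "nonzero_submodule R M N"
  obtain h x where h: "h \<in> lin_map R M (carrier M) M N" and x: "x \<in> carrier M" "h x \<noteq> \<zero>\<^bsub>M\<^esub>"
    using r N unfolding retractable_def by blast
  have "h \<in> lin_map R M (carrier M) M (carrier M)"
    using lin_map_codomain_mono[OF h] submoduleE(1) N by (auto simp: nonzero_submodule_def)
  then have "inj_on h (carrier M)" using monoform_inj_on[OF mono carrier_is_submodule] x by blast
  then show "embeds R M (carrier M) M N" unfolding embeds_def using h by blast
qed

text \<open>If f : N \<rightarrow> M were nonzero with nonzero kernel K, choose h : M \<rightarrow> N with f \<circ> h \<noteq> 0
  and a nonzero k : M \<rightarrow> K; the Ore condition gives k \<circ> s = h \<circ> t with k \<circ> s \<noteq> 0, but then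
  (f \<circ> h) \<circ> t = f \<circ> k \<circ> s = 0 forces t = 0 in the domain End(M).\<close>
lemma fully_retractable_left_ore_domain_imp_monoform:
  assumes fr: "fully_retractable R M" and ore: "left_ore_domain (End_ring R M)"
  shows "monoform R M"
  unfolding monoform_def
proof (intro conjI allI impI left_ore_domain_End_imp_nonzero_module[OF ore])
  let ?E = "End_ring R M"
  interpret E: ring ?E by (rule ring_End_ring)
  fix N f assume Ns: "submodule N R M" and f: "f \<in> lin_map R M N M (carrier M)"
    and ex: "\<exists>x\<in>N. f x \<noteq> \<zero>\<^bsub>M\<^esub>"
  have "f \<zero>\<^bsub>M\<^esub> = \<zero>\<^bsub>M\<^esub>" by (rule lin_map_zero[OF left_module_axioms left_module_axioms Ns f subset_refl])
  then have N: "nonzero_submodule R M N" unfolding nonzero_submodule_def using Ns ex by auto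
  define K where "K = {x\<in>N. f x = \<zero>\<^bsub>M\<^esub>}"
  have Ks: "submodule K R M"
    unfolding K_def by (rule kernel_submodule[OF left_module_axioms left_module_axioms Ns f subset_refl])
  show "inj_on f N"
  proof (rule ccontr)
    assume "\<not> inj_on f N"
    then have "nonzero_submodule R M K" unfolding nonzero_submodule_def
      using Ks lin_map_inj_on_iff[OF left_module_axioms left_module_axioms Ns f subset_refl] K_def by auto
    then obtain k x1 where k: "k \<in> lin_map R M (carrier M) M K" and x1: "x1 \<in> carrier M" "k x1 \<noteq> \<zero>\<^bsub>M\<^esub>"
      using fully_retractable_imp_retractable[OF fr] unfolding retractable_def by blast
    obtain h x0 where h: "h \<in> lin_map R M (carrier M) M N" and x0: "x0 \<in> carrier M" "f (h x0) \<noteq> \<zero>\<^bsub>M\<^esub>"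
      using fr N f ex unfolding fully_retractable_def by blast
    define F where "F = restrict (\<lambda>x. f (h x)) (carrier M)"
    define H where "H = restrict h (carrier M)"
    define k' where "k' = restrict k (carrier M)"
    have F: "F \<in> carrier ?E" unfolding F_def by (rule End_restrict_closed[OF lin_map_comp[OF h f]])
    have H: "H \<in> carrier ?E" unfolding H_def by (rule End_restrict_into_submodule[OF h Ns])
    have k': "k' \<in> carrier ?E" unfolding k'_def by (rule End_restrict_into_submodule[OF k Ks])
    have F0: "F \<noteq> \<zero>\<^bsub>?E\<^esub>" using End_nonzero_iff[OF F] x0 by (auto simp: F_def)
    have "H \<noteq> \<zero>\<^bsub>?E\<^esub>"
      using End_nonzero_iff[OF H] x0 \<open>f \<zero>\<^bsub>M\<^esub> = \<zero>\<^bsub>M\<^esub>\<close> by (auto simp: H_def)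
    moreover have "k' \<noteq> \<zero>\<^bsub>?E\<^esub>" using End_nonzero_iff[OF k'] x1 by (auto simp: k'_def)
    ultimately obtain s t where s: "s \<in> carrier ?E" and t: "t \<in> carrier ?E"
      and st: "s \<otimes>\<^bsub>?E\<^esub> k' = t \<otimes>\<^bsub>?E\<^esub> H" "s \<otimes>\<^bsub>?E\<^esub> k' \<noteq> \<zero>\<^bsub>?E\<^esub>"
      using ore k' H unfolding left_ore_domain_def by (meson DiffI singletonD)
    have "t \<otimes>\<^bsub>?E\<^esub> F = \<zero>\<^bsub>?E\<^esub>"
    proof (rule End_eqI[OF End_mult_closed[OF t F] End_zero_closed])
      fix x assume x: "x \<in> carrier M"
      have "h (t x) = k (s x)"
        using fun_cong[OF st(1), of x] End_closed[OF s x] End_closed[OF t x]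
        by (simp add: End_apply_mult x H_def k'_def)
      moreover have "k (s x) \<in> K" using lin_mapD(1)[OF k End_closed[OF s x]] .
      ultimately show "(t \<otimes>\<^bsub>?E\<^esub> F) x = \<zero>\<^bsub>?E\<^esub> x"
        using End_closed[OF t x] by (simp add: End_apply_mult End_apply_zero x F_def K_def)
    qed
    then have "t = \<zero>\<^bsub>?E\<^esub>"
      using ore t F F0 unfolding left_ore_domain_def nc_domain_def by blast
    then show False using st E.l_null[OF H] by simp
  qed
qed

lemma compressible_monoform_iff_fully_retractable_left_ore_domain:
  "compressible R M \<and> monoform R M \<longleftrightarrow> fully_retractable R M \<and> left_ore_domain (End_ring R M)"
  using compressible_monoform_imp_fully_retractable compressible_monoform_imp_left_ore_domain
    fully_retractable_left_ore_domain_imp_monoform fully_retractable_imp_retractable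
    retractable_monoform_imp_compressible
  by blast

end

section \<open>Injective modules\<close>

definition fun_graph :: "'a set \<Rightarrow> ('a \<Rightarrow> 'b) \<Rightarrow> ('a \<times> 'b) set" where
  "fun_graph D h = (\<lambda>x. (x, h x)) ` D"

lemma fun_graph_iff [simp]: "(x, y) \<in> fun_graph D h \<longleftrightarrow> x \<in> D \<and> y = h x"
  by (auto simp: fun_graph_def)

lemma fun_graph_subset_iff: "fun_graph D h \<subseteq> fun_graph D' h' \<longleftrightarrow> D \<subseteq> D' \<and> (\<forall>x\<in>D. h' x = h x)"
  by (auto simp: fun_graph_def)

lemma fst_image_fun_graph: "fst ` fun_graph D h = D"
  by (auto simp: fun_graph_def image_image)

lemma fun_graph_eq_imp_eq_domain: "fun_graph D h = fun_graph D' h' \<Longrightarrow> D = D'"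
  by (metis fst_image_fun_graph)

lemma fun_graph_chain_Union:
  assumes graphs: "\<And>G. G \<in> C \<Longrightarrow> G = fun_graph (D G) (h G)" and chain: "chain\<^sub>\<subseteq> C"
  shows "\<exists>g. (\<forall>G\<in>C. \<forall>x\<in>D G. g x = h G x) \<and> \<Union>C = fun_graph (\<Union>G\<in>C. D G) g"
proof -
  have mem: "(x, y) \<in> G \<longleftrightarrow> x \<in> D G \<and> y = h G x" if "G \<in> C" for G x y
    by (subst graphs[OF that]) simp
  have single_valued: "y = y'" if xy: "(x, y) \<in> \<Union>C" "(x, y') \<in> \<Union>C" for x y y'
  proof -
    obtain G1 G2 where G: "G1 \<in> C" "G2 \<in> C" "(x, y) \<in> G1" "(x, y') \<in> G2" using xy by auto
    have "G1 \<subseteq> G2 \<or> G2 \<subseteq> G1" using chain G(1,2) unfolding chain_subset_def by blast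
    then show ?thesis
    proof
      assume "G1 \<subseteq> G2"
      then show ?thesis using G(3,4) mem[OF G(2)] by auto
    next
      assume "G2 \<subseteq> G1"
      then show ?thesis using G(3,4) mem[OF G(1)] by auto
    qed
  qed
  define g where "g x = (SOME y. (x, y) \<in> \<Union>C)" for x
  have g_eq: "g x = h G x" if "G \<in> C" "x \<in> D G" for G x
  proof -
    have hx: "(x, h G x) \<in> \<Union>C" using that mem by blast
    then have "(x, g x) \<in> \<Union>C" unfolding g_def by (rule someI)
    then show ?thesis using hx by (rule single_valued)
  qed
  have "\<Union>C = fun_graph (\<Union>G\<in>C. D G) g"
  proof (intro equalityI subsetI)
    fix p assume "p \<in> \<Union>C"
    then obtain G x y where "G \<in> C" "p = (x, y)" "(x, y) \<in> G" by (metis UnionE surj_pair)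
    then show "p \<in> fun_graph (\<Union>G\<in>C. D G) g" using mem g_eq by auto
  next
    fix p assume "p \<in> fun_graph (\<Union>G\<in>C. D G) g"
    then obtain G x where "G \<in> C" "x \<in> D G" "p = (x, g x)" by (auto simp: fun_graph_def)
    then show "p \<in> \<Union>C" using mem g_eq by auto
  qed
  with g_eq show ?thesis by blast
qed

lemma chain_fun_graph_domains:
  assumes graphs: "\<And>G. G \<in> C \<Longrightarrow> G = fun_graph (D G) (h G)" and chain: "chain\<^sub>\<subseteq> C"
    and "G1 \<in> C" "G2 \<in> C"
  shows "D G1 \<subseteq> D G2 \<or> D G2 \<subseteq> D G1"
proof -
  have "G1 \<subseteq> G2 \<or> G2 \<subseteq> G1" using chain assms(3,4) unfolding chain_subset_def by blast
  then show ?thesis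
    using graphs[OF assms(3)] graphs[OF assms(4)] fun_graph_subset_iff by metis
qed

context left_module
begin

lemma submodule_Union_chain:
  assumes "\<C> \<noteq> {}" "\<And>N. N \<in> \<C> \<Longrightarrow> submodule N R M" "\<And>N N'. N \<in> \<C> \<Longrightarrow> N' \<in> \<C> \<Longrightarrow> N \<subseteq> N' \<or> N' \<subseteq> N"
  shows "submodule (\<Union>\<C>) R M"
proof (rule submoduleI)
  note S = submoduleE[OF assms(2)]
  show "\<Union>\<C> \<subseteq> carrier M" using S(1) by blast
  show "\<zero>\<^bsub>M\<^esub> \<in> \<Union>\<C>" using assms(1) S(2) by blast
  show "x \<oplus>\<^bsub>M\<^esub> y \<in> \<Union>\<C>" if xy: "x \<in> \<Union>\<C>" "y \<in> \<Union>\<C>" for x y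
  proof -
    obtain N N' where "N \<in> \<C>" "N' \<in> \<C>" "x \<in> N" "y \<in> N'" using xy by blast
    then show ?thesis using assms(3)[of N N'] S(3) by blast
  qed
  show "\<ominus>\<^bsub>M\<^esub> x \<in> \<Union>\<C>" if "x \<in> \<Union>\<C>" for x using that S(4) by blast
  show "a \<odot>\<^bsub>M\<^esub> x \<in> \<Union>\<C>" if "a \<in> carrier R" "x \<in> \<Union>\<C>" for a x using that S(5) by blast
qed

end

definition partial_extension ::
  "('r, 'c) ring_scheme \<Rightarrow> ('r, 'a, 'd) module_scheme \<Rightarrow> 'a set \<Rightarrow> ('a \<Rightarrow> 'a) \<Rightarrow> 'a set \<Rightarrow> ('a \<Rightarrow> 'a) \<Rightarrow> bool" where
  "partial_extension R M A f D h \<longleftrightarrow>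
    submodule D R M \<and> A \<subseteq> D \<and> h \<in> lin_map R M D M (carrier M) \<and> (\<forall>x\<in>A. h x = f x)"

context left_module
begin

lemma lin_map_Union_chain:
  assumes D: "\<And>i. i \<in> I \<Longrightarrow> submodule (D i) R M"
    and h: "\<And>i. i \<in> I \<Longrightarrow> h i \<in> lin_map R M (D i) M (carrier M)"
    and chain: "\<And>i j. i \<in> I \<Longrightarrow> j \<in> I \<Longrightarrow> D i \<subseteq> D j \<or> D j \<subseteq> D i"
    and g: "\<And>i x. i \<in> I \<Longrightarrow> x \<in> D i \<Longrightarrow> g x = h i x"
  shows "g \<in> lin_map R M (\<Union>i\<in>I. D i) M (carrier M)"
proof (rule lin_mapI)
  show "g x \<in> carrier M" if x: "x \<in> (\<Union>i\<in>I. D i)" for x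
  proof -
    obtain i where i: "i \<in> I" "x \<in> D i" using x by blast
    then show ?thesis using g[OF i] lin_mapD(1)[OF h[OF i(1)] i(2)] by simp
  qed
  show "g (x \<oplus>\<^bsub>M\<^esub> y) = g x \<oplus>\<^bsub>M\<^esub> g y" if xy: "x \<in> (\<Union>i\<in>I. D i)" "y \<in> (\<Union>i\<in>I. D i)" for x y
  proof -
    obtain i where i: "i \<in> I" "x \<in> D i" "y \<in> D i" using xy chain by blast
    then show ?thesis
      using g[OF i(1)] submoduleE(3)[OF D[OF i(1)] i(2,3)] lin_mapD(2)[OF h[OF i(1)] i(2,3)] by simp
  qed
  show "g (a \<odot>\<^bsub>M\<^esub> x) = a \<odot>\<^bsub>M\<^esub> g x" if a: "a \<in> carrier R" and x: "x \<in> (\<Union>i\<in>I. D i)" for a x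
  proof -
    obtain i where i: "i \<in> I" "x \<in> D i" using x by blast
    then show ?thesis
      using g[OF i(1)] submoduleE(5)[OF D[OF i(1)] a i(2)] lin_mapD(3)[OF h[OF i(1)] a i(2)] by simp
  qed
qed

lemma partial_extension_chain_Union:
  assumes C: "C \<subseteq> {fun_graph D h | D h. partial_extension R M A f D h}" and chain: "chain\<^sub>\<subseteq> C"
    and "C \<noteq> {}"
  shows "\<Union>C \<in> {fun_graph D h | D h. partial_extension R M A f D h}"
proof -
  have "\<forall>G\<in>C. \<exists>p. partial_extension R M A f (fst p) (snd p) \<and> G = fun_graph (fst p) (snd p)"
    using C by force
  then have "\<exists>p. \<forall>G\<in>C. partial_extension R M A f (fst (p G)) (snd (p G)) \<and> G = fun_graph (fst (p G)) (snd (p G))"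
    by (rule bchoice)
  then obtain p where p: "\<forall>G\<in>C. partial_extension R M A f (fst (p G)) (snd (p G))
      \<and> G = fun_graph (fst (p G)) (snd (p G))"
    by blast
  define D where "D G = fst (p G)" for G
  define h where "h G = snd (p G)" for G
  have ext: "\<And>G. G \<in> C \<Longrightarrow> partial_extension R M A f (D G) (h G)"
    and graphs: "\<And>G. G \<in> C \<Longrightarrow> G = fun_graph (D G) (h G)"
    using p by (simp_all add: D_def h_def)
  note ext = ext[unfolded partial_extension_def]
  note domains = chain_fun_graph_domains[OF graphs chain]
  obtain g where g_eq: "\<And>G x. G \<in> C \<Longrightarrow> x \<in> D G \<Longrightarrow> g x = h G x"
    and g_graph: "\<Union>C = fun_graph (\<Union>G\<in>C. D G) g"
    using fun_graph_chain_Union[OF graphs chain] by blast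
  obtain G0 where G0: "G0 \<in> C" using \<open>C \<noteq> {}\<close> by blast
  have "submodule (\<Union>(D ` C)) R M"
  proof (rule submodule_Union_chain)
    show "D ` C \<noteq> {}" using G0 by blast
    show "submodule N R M" if "N \<in> D ` C" for N using that ext by blast
    show "N \<subseteq> N' \<or> N' \<subseteq> N" if "N \<in> D ` C" "N' \<in> D ` C" for N N' using that domains by blast
  qed
  moreover have "g \<in> lin_map R M (\<Union>G\<in>C. D G) M (carrier M)"
    by (rule lin_map_Union_chain[OF _ _ domains g_eq]) (use ext in auto)
  moreover have "A \<subseteq> (\<Union>G\<in>C. D G)" using G0 ext[OF G0] by blast
  moreover have "\<forall>x\<in>A. g x = f x" using g_eq[OF G0] ext[OF G0] by auto
  ultimately have ext: "partial_extension R M A f (\<Union>G\<in>C. D G) g"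
    unfolding partial_extension_def by blast
  show ?thesis unfolding g_graph mem_Collect_eq
    by (rule exI[where x="\<Union>(D ` C)"], rule exI[where x=g], rule conjI[OF refl ext])
qed

end

lemma regular_module_simps [simp]:
  "carrier (regular_module R) = carrier R" "add (regular_module R) = add R"
  "zero (regular_module R) = zero R" "smult (regular_module R) = mult R"
  by (simp_all add: regular_module_def)

lemma a_inv_regular_module [simp]: "a_inv (regular_module R) = a_inv R"
  by (simp add: a_inv_def m_inv_def regular_module_def fun_eq_iff)

lemma left_module_regular_module:
  assumes "ring R"
  shows "left_module R (regular_module R)"
proof -
  interpret R: ring R by fact
  have "abelian_group (regular_module R)"
  proof (rule abelian_groupI)
    fix x assume "x \<in> carrier (regular_module R)"
    then show "\<exists>y\<in>carrier (regular_module R). y \<oplus>\<^bsub>regular_module R\<^esub> x = \<zero>\<^bsub>regular_module R\<^esub>"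
      by (intro bexI[of _ "\<ominus>\<^bsub>R\<^esub> x"]) (simp_all add: R.l_neg)
  next
    fix x y z assume "x \<in> carrier (regular_module R)" "y \<in> carrier (regular_module R)"
      "z \<in> carrier (regular_module R)"
    then show "x \<oplus>\<^bsub>regular_module R\<^esub> y \<oplus>\<^bsub>regular_module R\<^esub> z
        = x \<oplus>\<^bsub>regular_module R\<^esub> (y \<oplus>\<^bsub>regular_module R\<^esub> z)"
      by (simp add: R.a_assoc)
  next
    fix x y assume "x \<in> carrier (regular_module R)" "y \<in> carrier (regular_module R)"
    then show "x \<oplus>\<^bsub>regular_module R\<^esub> y = y \<oplus>\<^bsub>regular_module R\<^esub> x" by (simp add: R.a_comm)
  qed auto
  then show ?thesis
    by (intro left_module.intro assms left_module_axioms.intro)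
      (auto simp: R.l_distr R.r_distr R.m_assoc)
qed

context left_module
begin

lemma submodule_add_cyclic:
  assumes D: "submodule D R M" and b: "b \<in> carrier M"
  shows "submodule {d \<oplus>\<^bsub>M\<^esub> r \<odot>\<^bsub>M\<^esub> b | d r. d \<in> D \<and> r \<in> carrier R} R M"
    (is "submodule ?D' R M")
proof -
  note S = submoduleE[OF D]
  have DM: "d \<in> carrier M" if "d \<in> D" for d using that S(1) by blast
  show ?thesis
  proof (rule submoduleI)
    show "?D' \<subseteq> carrier M" using DM b smult_closed by auto
    show "\<zero>\<^bsub>M\<^esub> \<in> ?D'"
      using S(2) smult_l_null[OF b] by (intro CollectI exI[where x="\<zero>\<^bsub>M\<^esub>"] exI[where x="\<zero>\<^bsub>R\<^esub>"]) simp
  next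
    fix x y assume "x \<in> ?D'" "y \<in> ?D'"
    then obtain d1 r1 d2 r2 where "x = d1 \<oplus>\<^bsub>M\<^esub> r1 \<odot>\<^bsub>M\<^esub> b" "y = d2 \<oplus>\<^bsub>M\<^esub> r2 \<odot>\<^bsub>M\<^esub> b"
      "d1 \<in> D" "r1 \<in> carrier R" "d2 \<in> D" "r2 \<in> carrier R" by blast
    moreover from this have "x \<oplus>\<^bsub>M\<^esub> y = (d1 \<oplus>\<^bsub>M\<^esub> d2) \<oplus>\<^bsub>M\<^esub> (r1 \<oplus>\<^bsub>R\<^esub> r2) \<odot>\<^bsub>M\<^esub> b"
      using DM b by (simp add: smult_l_distr smult_closed M.a_ac)
    ultimately show "x \<oplus>\<^bsub>M\<^esub> y \<in> ?D'" using S(3) by blast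
  next
    fix x assume "x \<in> ?D'"
    then obtain d r where "x = d \<oplus>\<^bsub>M\<^esub> r \<odot>\<^bsub>M\<^esub> b" "d \<in> D" "r \<in> carrier R" by blast
    moreover from this have "\<ominus>\<^bsub>M\<^esub> x = (\<ominus>\<^bsub>M\<^esub> d) \<oplus>\<^bsub>M\<^esub> (\<ominus>\<^bsub>R\<^esub> r) \<odot>\<^bsub>M\<^esub> b"
      using DM b by (simp add: smult_l_minus smult_closed M.minus_add)
    ultimately show "\<ominus>\<^bsub>M\<^esub> x \<in> ?D'" using S(4) by blast
  next
    fix a x assume a: "a \<in> carrier R" and "x \<in> ?D'"
    then obtain d r where "x = d \<oplus>\<^bsub>M\<^esub> r \<odot>\<^bsub>M\<^esub> b" "d \<in> D" "r \<in> carrier R" by blast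
    moreover from this have "a \<odot>\<^bsub>M\<^esub> x = a \<odot>\<^bsub>M\<^esub> d \<oplus>\<^bsub>M\<^esub> (a \<otimes>\<^bsub>R\<^esub> r) \<odot>\<^bsub>M\<^esub> b"
      using DM a b by (simp add: smult_r_distr smult_assoc1 smult_closed)
    ultimately show "a \<odot>\<^bsub>M\<^esub> x \<in> ?D'" using S(5) a by blast
  qed
qed

lemma cyclic_extension_well_defined:
  assumes D: "submodule D R M" and h: "h \<in> lin_map R M D M (carrier M)"
    and b: "b \<in> carrier M" and e: "e \<in> carrier M"
    and compatible: "\<And>r. r \<in> carrier R \<Longrightarrow> r \<odot>\<^bsub>M\<^esub> b \<in> D \<Longrightarrow> h (r \<odot>\<^bsub>M\<^esub> b) = r \<odot>\<^bsub>M\<^esub> e"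
    and d: "d \<in> D" "d' \<in> D" and r: "r \<in> carrier R" "r' \<in> carrier R"
    and eq: "d \<oplus>\<^bsub>M\<^esub> r \<odot>\<^bsub>M\<^esub> b = d' \<oplus>\<^bsub>M\<^esub> r' \<odot>\<^bsub>M\<^esub> b"
  shows "h d \<oplus>\<^bsub>M\<^esub> r \<odot>\<^bsub>M\<^esub> e = h d' \<oplus>\<^bsub>M\<^esub> r' \<odot>\<^bsub>M\<^esub> e"
proof -
  have DM: "d \<in> carrier M" "d' \<in> carrier M" using d submoduleE(1)[OF D] by auto
  have "(r \<ominus>\<^bsub>R\<^esub> r') \<odot>\<^bsub>M\<^esub> b = d' \<ominus>\<^bsub>M\<^esub> d"
    using add_eq_add_iff_diff_eq[of d "r \<odot>\<^bsub>M\<^esub> b" d' "r' \<odot>\<^bsub>M\<^esub> b"] eq r b DM smult_closed smult_l_diff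
    by simp
  then have "h d' \<ominus>\<^bsub>M\<^esub> h d = (r \<ominus>\<^bsub>R\<^esub> r') \<odot>\<^bsub>M\<^esub> e"
    using compatible[of "r \<ominus>\<^bsub>R\<^esub> r'"] submodule_diff_closed[OF D d(2,1)] r
      lin_map_diff[OF left_module_axioms left_module_axioms D h subset_refl d(2,1)] by simp
  then show ?thesis
    using add_eq_add_iff_diff_eq[of "h d" "r \<odot>\<^bsub>M\<^esub> e" "h d'" "r' \<odot>\<^bsub>M\<^esub> e"] lin_mapD(1)[OF h] d r e
      smult_closed smult_l_diff
    by simp
qed

lemma lin_map_extend_cyclic:
  assumes D: "submodule D R M" and h: "h \<in> lin_map R M D M (carrier M)"
    and b: "b \<in> carrier M" and e: "e \<in> carrier M"
    and compatible: "\<And>r. r \<in> carrier R \<Longrightarrow> r \<odot>\<^bsub>M\<^esub> b \<in> D \<Longrightarrow> h (r \<odot>\<^bsub>M\<^esub> b) = r \<odot>\<^bsub>M\<^esub> e"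
  obtains h' where "h' \<in> lin_map R M {d \<oplus>\<^bsub>M\<^esub> r \<odot>\<^bsub>M\<^esub> b | d r. d \<in> D \<and> r \<in> carrier R} M (carrier M)"
    "\<And>d r. d \<in> D \<Longrightarrow> r \<in> carrier R \<Longrightarrow> h' (d \<oplus>\<^bsub>M\<^esub> r \<odot>\<^bsub>M\<^esub> b) = h d \<oplus>\<^bsub>M\<^esub> r \<odot>\<^bsub>M\<^esub> e"
proof -
  note S = submoduleE[OF D]
  have DM: "d \<in> carrier M" if "d \<in> D" for d using that S(1) by blast
  have hM: "h d \<in> carrier M" if "d \<in> D" for d using lin_mapD(1)[OF h that] .
  note well_defined = cyclic_extension_well_defined[OF D h b e compatible]
  define h' where "h' z = (SOME v. \<exists>d r. d \<in> D \<and> r \<in> carrier R \<and> z = d \<oplus>\<^bsub>M\<^esub> r \<odot>\<^bsub>M\<^esub> b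
    \<and> v = h d \<oplus>\<^bsub>M\<^esub> r \<odot>\<^bsub>M\<^esub> e)" for z
  have h'_eq: "h' (d \<oplus>\<^bsub>M\<^esub> r \<odot>\<^bsub>M\<^esub> b) = h d \<oplus>\<^bsub>M\<^esub> r \<odot>\<^bsub>M\<^esub> e" if dr: "d \<in> D" "r \<in> carrier R" for d r
  proof -
    have "\<exists>d' r'. d' \<in> D \<and> r' \<in> carrier R \<and> d \<oplus>\<^bsub>M\<^esub> r \<odot>\<^bsub>M\<^esub> b = d' \<oplus>\<^bsub>M\<^esub> r' \<odot>\<^bsub>M\<^esub> b
        \<and> h' (d \<oplus>\<^bsub>M\<^esub> r \<odot>\<^bsub>M\<^esub> b) = h d' \<oplus>\<^bsub>M\<^esub> r' \<odot>\<^bsub>M\<^esub> e"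
      unfolding h'_def by (rule someI_ex) (use dr in blast)
    then show ?thesis using well_defined dr by metis
  qed
  have "h' \<in> lin_map R M {d \<oplus>\<^bsub>M\<^esub> r \<odot>\<^bsub>M\<^esub> b | d r. d \<in> D \<and> r \<in> carrier R} M (carrier M)"
  proof (rule lin_mapI)
    fix x assume "x \<in> {d \<oplus>\<^bsub>M\<^esub> r \<odot>\<^bsub>M\<^esub> b | d r. d \<in> D \<and> r \<in> carrier R}"
    then obtain d r where "x = d \<oplus>\<^bsub>M\<^esub> r \<odot>\<^bsub>M\<^esub> b" "d \<in> D" "r \<in> carrier R" by blast
    then show "h' x \<in> carrier M" using h'_eq hM e smult_closed by simp
  next
    fix x y assume "x \<in> {d \<oplus>\<^bsub>M\<^esub> r \<odot>\<^bsub>M\<^esub> b | d r. d \<in> D \<and> r \<in> carrier R}"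
      "y \<in> {d \<oplus>\<^bsub>M\<^esub> r \<odot>\<^bsub>M\<^esub> b | d r. d \<in> D \<and> r \<in> carrier R}"
    then obtain d1 r1 d2 r2 where dr: "x = d1 \<oplus>\<^bsub>M\<^esub> r1 \<odot>\<^bsub>M\<^esub> b" "y = d2 \<oplus>\<^bsub>M\<^esub> r2 \<odot>\<^bsub>M\<^esub> b"
      "d1 \<in> D" "r1 \<in> carrier R" "d2 \<in> D" "r2 \<in> carrier R" by blast
    have "x \<oplus>\<^bsub>M\<^esub> y = (d1 \<oplus>\<^bsub>M\<^esub> d2) \<oplus>\<^bsub>M\<^esub> (r1 \<oplus>\<^bsub>R\<^esub> r2) \<odot>\<^bsub>M\<^esub> b"
      using dr DM b by (simp add: smult_l_distr smult_closed M.a_ac)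
    then show "h' (x \<oplus>\<^bsub>M\<^esub> y) = h' x \<oplus>\<^bsub>M\<^esub> h' y"
      using dr h'_eq S(3) lin_mapD(2)[OF h] hM e by (simp add: smult_l_distr smult_closed M.a_ac)
  next
    fix a x assume a: "a \<in> carrier R" and "x \<in> {d \<oplus>\<^bsub>M\<^esub> r \<odot>\<^bsub>M\<^esub> b | d r. d \<in> D \<and> r \<in> carrier R}"
    then obtain d r where dr: "x = d \<oplus>\<^bsub>M\<^esub> r \<odot>\<^bsub>M\<^esub> b" "d \<in> D" "r \<in> carrier R" by blast
    have "a \<odot>\<^bsub>M\<^esub> x = a \<odot>\<^bsub>M\<^esub> d \<oplus>\<^bsub>M\<^esub> (a \<otimes>\<^bsub>R\<^esub> r) \<odot>\<^bsub>M\<^esub> b"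
      using dr DM a b by (simp add: smult_r_distr smult_assoc1 smult_closed)
    then show "h' (a \<odot>\<^bsub>M\<^esub> x) = a \<odot>\<^bsub>M\<^esub> h' x"
      using dr h'_eq S(5) lin_mapD(3)[OF h] hM a e by (simp add: smult_r_distr smult_assoc1 smult_closed)
  qed
  then show thesis using that h'_eq by blast
qed

lemma submodule_conductor:
  assumes D: "submodule D R M" and b: "b \<in> carrier M"
  shows "submodule {r \<in> carrier R. r \<odot>\<^bsub>M\<^esub> b \<in> D} R (regular_module R)"
proof (rule left_module.submoduleI[OF left_module_regular_module[OF R.ring_axioms]])
  note S = submoduleE[OF D]
  show "\<zero>\<^bsub>regular_module R\<^esub> \<in> {r \<in> carrier R. r \<odot>\<^bsub>M\<^esub> b \<in> D}" using smult_l_null[OF b] S(2) by simp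
  show "x \<oplus>\<^bsub>regular_module R\<^esub> y \<in> {r \<in> carrier R. r \<odot>\<^bsub>M\<^esub> b \<in> D}"
    if "x \<in> {r \<in> carrier R. r \<odot>\<^bsub>M\<^esub> b \<in> D}" "y \<in> {r \<in> carrier R. r \<odot>\<^bsub>M\<^esub> b \<in> D}" for x y
    using that S(3) b by (simp add: smult_l_distr)
  show "\<ominus>\<^bsub>regular_module R\<^esub> x \<in> {r \<in> carrier R. r \<odot>\<^bsub>M\<^esub> b \<in> D}"
    if "x \<in> {r \<in> carrier R. r \<odot>\<^bsub>M\<^esub> b \<in> D}" for x
    using that S(4) b by (simp add: smult_l_minus)
  show "a \<odot>\<^bsub>regular_module R\<^esub> x \<in> {r \<in> carrier R. r \<odot>\<^bsub>M\<^esub> b \<in> D}"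
    if "a \<in> carrier R" "x \<in> {r \<in> carrier R. r \<odot>\<^bsub>M\<^esub> b \<in> D}" for a x
    using that S(5) b by (simp add: smult_assoc1)
qed auto

text \<open>Baer's criterion supplies the image e of b: the map r \<mapsto> h(rb) on the left ideal
  {r. rb \<in> D} is right multiplication by some e.\<close>
lemma partial_extension_step:
  assumes inj: "injective_module R M" and P: "partial_extension R M A f D h" and b: "b \<in> carrier M"
  shows "\<exists>D' h'. partial_extension R M A f D' h' \<and> fun_graph D h \<subseteq> fun_graph D' h' \<and> b \<in> D'"
proof -
  have D: "submodule D R M" and AD: "A \<subseteq> D" and h: "h \<in> lin_map R M D M (carrier M)"
    and hf: "\<forall>x\<in>A. h x = f x"
    using P unfolding partial_extension_def by auto
  note S = submoduleE[OF D]
  have "(\<lambda>r. h (r \<odot>\<^bsub>M\<^esub> b)) \<in> lin_map R (regular_module R) {r \<in> carrier R. r \<odot>\<^bsub>M\<^esub> b \<in> D} M (carrier M)"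
    using lin_mapD[OF h] b by (intro lin_mapI) (auto simp: smult_l_distr smult_assoc1)
  then obtain e where e: "e \<in> carrier M" "\<And>r. r \<in> carrier R \<Longrightarrow> r \<odot>\<^bsub>M\<^esub> b \<in> D \<Longrightarrow> h (r \<odot>\<^bsub>M\<^esub> b) = r \<odot>\<^bsub>M\<^esub> e"
    using inj submodule_conductor[OF D b] unfolding injective_module_def by force
  define D' where "D' = {d \<oplus>\<^bsub>M\<^esub> r \<odot>\<^bsub>M\<^esub> b | d r. d \<in> D \<and> r \<in> carrier R}"
  obtain h' where h': "h' \<in> lin_map R M D' M (carrier M)"
    and h'_eq: "\<And>d r. d \<in> D \<Longrightarrow> r \<in> carrier R \<Longrightarrow> h' (d \<oplus>\<^bsub>M\<^esub> r \<odot>\<^bsub>M\<^esub> b) = h d \<oplus>\<^bsub>M\<^esub> r \<odot>\<^bsub>M\<^esub> e"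
    unfolding D'_def by (rule lin_map_extend_cyclic[OF D h b e]) blast+
  have DD': "d \<in> D'" "h' d = h d" if d: "d \<in> D" for d
  proof -
    have "d = d \<oplus>\<^bsub>M\<^esub> \<zero>\<^bsub>R\<^esub> \<odot>\<^bsub>M\<^esub> b" using smult_l_null[OF b] S(1) d by auto
    then show "d \<in> D'" "h' d = h d"
      using h'_eq[OF d R.zero_closed] smult_l_null[OF e(1)] lin_mapD(1)[OF h d] d unfolding D'_def by auto
  qed
  have "b = \<zero>\<^bsub>M\<^esub> \<oplus>\<^bsub>M\<^esub> \<one>\<^bsub>R\<^esub> \<odot>\<^bsub>M\<^esub> b" using b smult_one by simp
  then have "b \<in> D'" unfolding D'_def using S(2) by blast
  moreover have "partial_extension R M A f D' h'"
    unfolding partial_extension_def D'_def[symmetric]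
    using submodule_add_cyclic[OF D b, folded D'_def] h' AD DD' hf by auto
  moreover have "fun_graph D h \<subseteq> fun_graph D' h'" unfolding fun_graph_subset_iff using DD' by auto
  ultimately show ?thesis by blast
qed

text \<open>Baer's criterion (injective_module is Baer's condition), by Zorn's lemma on graphs of
  partial extensions.\<close>
lemma injective_module_extend:
  assumes inj: "injective_module R M" and A: "submodule A R M" and f: "f \<in> lin_map R M A M (carrier M)"
  shows "\<exists>F\<in>lin_map R M (carrier M) M (carrier M). \<forall>x\<in>A. F x = f x"
proof -
  define \<A> where "\<A> = {fun_graph D h | D h. partial_extension R M A f D h}"
  have base: "fun_graph A f \<in> \<A>" unfolding \<A>_def partial_extension_def using A f by blast
  have "\<forall>C\<in>chains \<A>. \<exists>U\<in>\<A>. \<forall>X\<in>C. X \<subseteq> U"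
  proof
    fix C assume C: "C \<in> chains \<A>"
    show "\<exists>U\<in>\<A>. \<forall>X\<in>C. X \<subseteq> U"
    proof (cases "C = {}")
      case True then show ?thesis using base by blast
    next
      case False
      have "\<Union>C \<in> \<A>" unfolding \<A>_def
        by (rule partial_extension_chain_Union) (use C False in \<open>auto simp: chains_def \<A>_def\<close>)
      then show ?thesis by blast
    qed
  qed
  then obtain G where G: "G \<in> \<A>" and max: "\<forall>X\<in>\<A>. G \<subseteq> X \<longrightarrow> X = G"
    by (rule Zorn_Lemma2[elim_format]) blast
  obtain D h where Dh: "partial_extension R M A f D h" "G = fun_graph D h" using G \<A>_def by blast
  have "carrier M \<subseteq> D"
  proof
    fix b assume b: "b \<in> carrier M"
    obtain D' h' where D': "partial_extension R M A f D' h'" "fun_graph D h \<subseteq> fun_graph D' h'" "b \<in> D'"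
      using partial_extension_step[OF inj Dh(1) b] by blast
    have "fun_graph D' h' = fun_graph D h" using max D'(1,2) Dh(2) unfolding \<A>_def by blast
    then show "b \<in> D" using fun_graph_eq_imp_eq_domain D'(3) by blast
  qed
  moreover have "D \<subseteq> carrier M" using Dh(1) submoduleE(1) unfolding partial_extension_def by blast
  ultimately show ?thesis using Dh(1) unfolding partial_extension_def by auto
qed

end

section \<open>The self-injective hull\<close>

locale injective_hull_setting =
  fixes R :: "('r, 'c) ring_scheme" and M :: "('r, 'a) module" and E :: "('r, 'e) module"
    and \<iota> :: "'a \<Rightarrow> 'e"
  assumes left_module_M: "left_module R M" and hull: "injective_hull R M E \<iota>"
begin

abbreviation Mhat :: "'e set" where "Mhat \<equiv> self_injective_hull R M E"

abbreviation End_Mhat :: "('e \<Rightarrow> 'e) ring" where "End_Mhat \<equiv> End_ring R (E\<lparr>carrier := Mhat\<rparr>)"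

lemma left_module_E: "left_module R E"
  and injective_E: "injective_module R E"
  and iota_lin_map: "\<iota> \<in> lin_map R M (carrier M) E (carrier E)"
  and inj_on_iota: "inj_on \<iota> (carrier M)"
  using hull by (simp_all add: injective_hull_def)

sublocale M: left_module R M by (rule left_module_M)
sublocale E: left_module R E by (rule left_module_E)

lemma iota_zero: "\<iota> \<zero>\<^bsub>M\<^esub> = \<zero>\<^bsub>E\<^esub>"
  by (rule lin_map_zero[OF left_module_M left_module_E M.carrier_is_submodule iota_lin_map subset_refl])

lemma iota_nonzero: "x \<in> carrier M \<Longrightarrow> x \<noteq> \<zero>\<^bsub>M\<^esub> \<Longrightarrow> \<iota> x \<noteq> \<zero>\<^bsub>E\<^esub>"
  using inj_onD[OF inj_on_iota, of x "\<zero>\<^bsub>M\<^esub>"] iota_zero by auto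

lemma iota_essential:
  assumes "nonzero_submodule R E N"
  obtains x where "x \<in> carrier M" "\<iota> x \<in> N" "x \<noteq> \<zero>\<^bsub>M\<^esub>"
proof -
  have "N \<inter> \<iota> ` carrier M \<noteq> {\<zero>\<^bsub>E\<^esub>}" using hull assms by (simp add: injective_hull_def)
  moreover have "\<zero>\<^bsub>E\<^esub> \<in> N" using assms E.submoduleE(2) by (simp add: nonzero_submodule_def)
  moreover have "\<zero>\<^bsub>E\<^esub> \<in> \<iota> ` carrier M" using iota_zero by force
  ultimately obtain x where "x \<in> carrier M" "\<iota> x \<in> N" "\<iota> x \<noteq> \<zero>\<^bsub>E\<^esub>" by blast
  then show thesis using that iota_zero by fastforce
qed

lemma Mhat_def':
  "Mhat = \<Inter>{N. submodule N R E \<and> (\<forall>g\<in>lin_map R M (carrier M) E (carrier E). g ` carrier M \<subseteq> N)}"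
  unfolding self_injective_hull_def generated_submodule_def by blast

lemma submodule_Mhat: "submodule Mhat R E"
  unfolding Mhat_def'
proof (rule E.submodule_Inter)
  show "{N. submodule N R E \<and> (\<forall>g\<in>lin_map R M (carrier M) E (carrier E). g ` carrier M \<subseteq> N)} \<noteq> {}"
    using E.carrier_is_submodule by (auto dest: lin_mapD(1))
qed simp

lemma lin_map_image_in_Mhat: "g \<in> lin_map R M (carrier M) E (carrier E) \<Longrightarrow> x \<in> carrier M \<Longrightarrow> g x \<in> Mhat"
  unfolding Mhat_def' by blast

lemma Mhat_subset:
  "submodule P R E \<Longrightarrow> (\<And>g x. g \<in> lin_map R M (carrier M) E (carrier E) \<Longrightarrow> x \<in> carrier M \<Longrightarrow> g x \<in> P)
    \<Longrightarrow> Mhat \<subseteq> P"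
  unfolding Mhat_def' by blast

lemma Mhat_subset_carrier: "Mhat \<subseteq> carrier E"
  using E.submoduleE(1)[OF submodule_Mhat] .

lemma iota_in_Mhat: "x \<in> carrier M \<Longrightarrow> \<iota> x \<in> Mhat"
  by (rule lin_map_image_in_Mhat[OF iota_lin_map])

lemma iota_lin_map_Mhat: "\<iota> \<in> lin_map R M (carrier M) E Mhat"
  by (rule lin_map_mono[OF iota_lin_map subset_refl iota_in_Mhat])

lemma left_module_Mhat: "left_module R (E\<lparr>carrier := Mhat\<rparr>)"
  by (rule E.submodule_is_left_module[OF submodule_Mhat])

lemma ring_End_Mhat: "ring End_Mhat"
  by (rule left_module.ring_End_ring[OF left_module_Mhat])

lemma End_Mhat_carrier: "F \<in> carrier End_Mhat \<longleftrightarrow> F \<in> lin_map R E Mhat E Mhat \<and> F \<in> extensional Mhat"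
  by (simp add: End_ring_def lin_map_def)

lemma End_Mhat_restrict_closed: "F \<in> lin_map R E Mhat E Mhat \<Longrightarrow> restrict F Mhat \<in> carrier End_Mhat"
  using left_module.End_restrict_closed[OF left_module_Mhat, of F] by (simp add: lin_map_def)

lemma End_Mhat_lin_map: "F \<in> carrier End_Mhat \<Longrightarrow> F \<in> lin_map R E Mhat E (carrier E)"
  by (auto simp: End_Mhat_carrier intro: lin_map_codomain_mono[OF _ Mhat_subset_carrier])

lemma End_Mhat_apply_mult: "x \<in> Mhat \<Longrightarrow> (F \<otimes>\<^bsub>End_Mhat\<^esub> G) x = G (F x)"
  and End_Mhat_apply_one: "x \<in> Mhat \<Longrightarrow> \<one>\<^bsub>End_Mhat\<^esub> x = x"
  and End_Mhat_apply_zero: "x \<in> Mhat \<Longrightarrow> \<zero>\<^bsub>End_Mhat\<^esub> x = \<zero>\<^bsub>E\<^esub>"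
  and End_Mhat_apply_add: "x \<in> Mhat \<Longrightarrow> (F \<oplus>\<^bsub>End_Mhat\<^esub> G) x = F x \<oplus>\<^bsub>E\<^esub> G x"
  by (simp_all add: End_ring_def compose_def)

lemma End_Mhat_eqI: "F \<in> carrier End_Mhat \<Longrightarrow> G \<in> carrier End_Mhat \<Longrightarrow> (\<And>x. x \<in> Mhat \<Longrightarrow> F x = G x) \<Longrightarrow> F = G"
  using left_module.End_eqI[OF left_module_Mhat, of F G] by simp

lemma End_Mhat_closed: "F \<in> carrier End_Mhat \<Longrightarrow> x \<in> Mhat \<Longrightarrow> F x \<in> Mhat"
  using left_module.End_closed[OF left_module_Mhat, of F x] by simp

lemma End_Mhat_closed_ops:
  "F \<in> carrier End_Mhat \<Longrightarrow> G \<in> carrier End_Mhat \<Longrightarrow> F \<otimes>\<^bsub>End_Mhat\<^esub> G \<in> carrier End_Mhat"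
  "F \<in> carrier End_Mhat \<Longrightarrow> G \<in> carrier End_Mhat \<Longrightarrow> F \<oplus>\<^bsub>End_Mhat\<^esub> G \<in> carrier End_Mhat"
  "\<one>\<^bsub>End_Mhat\<^esub> \<in> carrier End_Mhat" "\<zero>\<^bsub>End_Mhat\<^esub> \<in> carrier End_Mhat"
  using left_module.End_closed_ops[OF left_module_Mhat] by auto

text \<open>Maps from submodules of Mhat extend to E since E is injective, and every
  endomorphism of E maps Mhat into itself.\<close>
lemma End_Mhat_extend:
  assumes A: "submodule A R E" "A \<subseteq> Mhat" and k: "k \<in> lin_map R E A E (carrier E)"
  obtains F where "F \<in> carrier End_Mhat" "\<And>x. x \<in> A \<Longrightarrow> F x = k x"
proof -
  obtain F where F: "F \<in> lin_map R E (carrier E) E (carrier E)" "\<forall>x\<in>A. F x = k x"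
    using E.injective_module_extend[OF injective_E A(1) k] by blast
  have F_Mhat: "F \<in> lin_map R E Mhat E (carrier E)"
    using lin_mapD(1)[OF F(1)] Mhat_subset_carrier by (intro lin_map_mono[OF F(1) Mhat_subset_carrier]) auto
  have "Mhat \<subseteq> {x \<in> Mhat. F x \<in> Mhat}"
  proof (rule Mhat_subset)
    show "submodule {x \<in> Mhat. F x \<in> Mhat} R E"
      by (rule vimage_submodule[OF left_module_E left_module_E submodule_Mhat F_Mhat subset_refl submodule_Mhat])
    fix g x assume g: "g \<in> lin_map R M (carrier M) E (carrier E)" and x: "x \<in> carrier M"
    show "g x \<in> {x \<in> Mhat. F x \<in> Mhat}"
      using lin_map_image_in_Mhat[OF lin_map_comp[OF g F(1)] x] lin_map_image_in_Mhat[OF g x] by simp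
  qed
  then have "F \<in> lin_map R E Mhat E Mhat"
    by (intro lin_map_mono[OF F(1) Mhat_subset_carrier]) auto
  then have "restrict F Mhat \<in> carrier End_Mhat" by (rule End_Mhat_restrict_closed)
  moreover have "\<And>x. x \<in> A \<Longrightarrow> restrict F Mhat x = k x" using F(2) A(2) by auto
  ultimately show thesis by (rule that)
qed

lemma nonzero_image_submodule:
  assumes g: "g \<in> lin_map R M (carrier M) E (carrier E)" and ex: "\<exists>x\<in>carrier M. g x \<noteq> \<zero>\<^bsub>E\<^esub>"
  shows "nonzero_submodule R E (g ` carrier M)"
  unfolding nonzero_submodule_def
  using image_submodule[OF left_module_M left_module_E M.carrier_is_submodule g subset_refl] ex by force

text \<open>Essentiality makes g\<inverse>(\<iota>(M)) a nonzero submodule on which \<iota>\<inverse> \<circ> g is injective by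
  monoformity; a nonzero kernel of g would meet it by uniformity.\<close>
lemma monoform_lin_map_into_hull_inj:
  assumes mono: "monoform R M" and g: "g \<in> lin_map R M (carrier M) E (carrier E)"
    and ex: "\<exists>x\<in>carrier M. g x \<noteq> \<zero>\<^bsub>E\<^esub>"
  shows "inj_on g (carrier M)"
proof -
  note CM = M.carrier_is_submodule
  have Is: "submodule (\<iota> ` carrier M) R E"
    by (rule image_submodule[OF left_module_M left_module_E CM iota_lin_map subset_refl])
  define N where "N = {x \<in> carrier M. g x \<in> \<iota> ` carrier M}"
  have Ns: "submodule N R M"
    unfolding N_def by (rule vimage_submodule[OF left_module_M left_module_E CM g subset_refl Is])
  have g0: "g \<zero>\<^bsub>M\<^esub> = \<zero>\<^bsub>E\<^esub>" by (rule lin_map_zero[OF left_module_M left_module_E CM g subset_refl])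
  obtain m0 where m0: "m0 \<in> carrier M" "\<iota> m0 \<in> g ` carrier M" "m0 \<noteq> \<zero>\<^bsub>M\<^esub>"
    using nonzero_image_submodule[OF g ex] by (rule iota_essential)
  then obtain x0 where x0: "x0 \<in> carrier M" "g x0 = \<iota> m0" by auto
  have x0N: "x0 \<in> N" unfolding N_def using x0 m0(1) by auto
  have "x0 \<noteq> \<zero>\<^bsub>M\<^esub>" using x0 iota_nonzero[OF m0(1,3)] g0 by auto
  then have Nnz: "nonzero_submodule R M N" unfolding nonzero_submodule_def using Ns x0N by auto
  have gN: "g \<in> lin_map R M N E (carrier E)"
    by (rule lin_map_mono[OF g]) (use N_def lin_mapD(1)[OF g] in auto)
  define k where "k x = inv_into (carrier M) \<iota> (g x)" for x
  note k_inv = lin_map_inv_into[OF left_module_M left_module_M Ns iota_lin_map inj_on_iota gN, folded k_def]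
  have k: "k \<in> lin_map R M N M (carrier M)" and iota_k: "\<And>x. x \<in> N \<Longrightarrow> \<iota> (k x) = g x"
    using k_inv unfolding N_def by auto
  have "k x0 \<noteq> \<zero>\<^bsub>M\<^esub>" using iota_k[OF x0N] x0 iota_nonzero[OF m0(1,3)] iota_zero by auto
  then have k_nonzero: "k y \<noteq> \<zero>\<^bsub>M\<^esub>" if "y \<in> N" "y \<noteq> \<zero>\<^bsub>M\<^esub>" for y
    using M.monoform_nonzero_image[OF mono Ns k _ that] x0N by blast
  have "\<forall>z\<in>carrier M. g z = \<zero>\<^bsub>E\<^esub> \<longrightarrow> z = \<zero>\<^bsub>M\<^esub>"
  proof (rule ccontr)
    assume "\<not> (\<forall>z\<in>carrier M. g z = \<zero>\<^bsub>E\<^esub> \<longrightarrow> z = \<zero>\<^bsub>M\<^esub>)"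
    then obtain z where z: "z \<in> carrier M" "g z = \<zero>\<^bsub>E\<^esub>" "z \<noteq> \<zero>\<^bsub>M\<^esub>" by blast
    define Z where "Z = {x \<in> carrier M. g x = \<zero>\<^bsub>E\<^esub>}"
    have "submodule Z R M"
      unfolding Z_def by (rule kernel_submodule[OF left_module_M left_module_E CM g subset_refl])
    then have "nonzero_submodule R M Z" unfolding nonzero_submodule_def using z Z_def by auto
    then obtain w where w: "w \<in> Z \<inter> N" "w \<noteq> \<zero>\<^bsub>M\<^esub>" using M.monoform_uniform[OF mono _ Nnz] by blast
    have "k w = inv_into (carrier M) \<iota> (\<iota> \<zero>\<^bsub>M\<^esub>)" unfolding k_def using w(1) Z_def iota_zero by simp
    also have "\<dots> = \<zero>\<^bsub>M\<^esub>" using inv_into_f_f[OF inj_on_iota M.M.zero_closed] .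
    finally show False using k_nonzero w by blast
  qed
  then show ?thesis using lin_map_inj_on_iff[OF left_module_M left_module_E CM g subset_refl] by blast
qed

text \<open>Each generator g(m) of Mhat is killed: if D \<circ> g \<noteq> 0, it is injective, yet
  g(M) \<inter> \<iota>(N) \<noteq> 0 by essentiality and uniformity, where D vanishes.\<close>
lemma monoform_lin_map_vanishes:
  assumes mono: "monoform R M" and D: "D \<in> lin_map R E Mhat E (carrier E)"
    and N: "nonzero_submodule R M N" and D0: "\<And>x. x \<in> N \<Longrightarrow> D (\<iota> x) = \<zero>\<^bsub>E\<^esub>"
    and y: "y \<in> Mhat"
  shows "D y = \<zero>\<^bsub>E\<^esub>"
proof -
  note CM = M.carrier_is_submodule
  have Dz: "D \<zero>\<^bsub>E\<^esub> = \<zero>\<^bsub>E\<^esub>" by (rule lin_map_zero[OF left_module_E left_module_E submodule_Mhat D subset_refl])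
  have "Mhat \<subseteq> {y \<in> Mhat. D y = \<zero>\<^bsub>E\<^esub>}"
  proof (rule Mhat_subset)
    show "submodule {y \<in> Mhat. D y = \<zero>\<^bsub>E\<^esub>} R E"
      by (rule kernel_submodule[OF left_module_E left_module_E submodule_Mhat D subset_refl])
    fix g m assume g: "g \<in> lin_map R M (carrier M) E (carrier E)" and m: "m \<in> carrier M"
    have gMhat: "g x \<in> Mhat" if "x \<in> carrier M" for x by (rule lin_map_image_in_Mhat[OF g that])
    have g0: "g \<zero>\<^bsub>M\<^esub> = \<zero>\<^bsub>E\<^esub>" by (rule lin_map_zero[OF left_module_M left_module_E CM g subset_refl])
    have "D (g m) = \<zero>\<^bsub>E\<^esub>"
    proof (cases "\<exists>x\<in>carrier M. g x \<noteq> \<zero>\<^bsub>E\<^esub>")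
      case False then show ?thesis using m Dz by auto
    next
      case True
      have Dg: "(\<lambda>x. D (g x)) \<in> lin_map R M (carrier M) E (carrier E)"
        by (rule lin_map_comp[OF lin_map_mono[OF g subset_refl gMhat] D])
      have Gs: "submodule (g ` carrier M) R E"
        by (rule image_submodule[OF left_module_M left_module_E CM g subset_refl])
      define P where "P = {x \<in> carrier M. \<iota> x \<in> g ` carrier M}"
      have Ps: "submodule P R M"
        unfolding P_def by (rule vimage_submodule[OF left_module_M left_module_E CM iota_lin_map subset_refl Gs])
      obtain m1 where "m1 \<in> carrier M" "\<iota> m1 \<in> g ` carrier M" "m1 \<noteq> \<zero>\<^bsub>M\<^esub>"
        using nonzero_image_submodule[OF g True] by (rule iota_essential)
      then have "nonzero_submodule R M P" unfolding nonzero_submodule_def P_def using Ps P_def by auto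
      then obtain m2 where m2: "m2 \<in> N \<inter> P" "m2 \<noteq> \<zero>\<^bsub>M\<^esub>" using M.monoform_uniform[OF mono N] by blast
      then obtain x where x: "x \<in> carrier M" "\<iota> m2 = g x" using P_def by auto
      have "x \<noteq> \<zero>\<^bsub>M\<^esub>" using iota_nonzero[of m2] m2 x g0 P_def by auto
      moreover have "D (g x) = D (g \<zero>\<^bsub>M\<^esub>)" using D0[of m2] m2 x g0 Dz by simp
      ultimately have "\<not> inj_on (\<lambda>x. D (g x)) (carrier M)" using x(1) by (meson M.M.zero_closed inj_onD)
      then show ?thesis using monoform_lin_map_into_hull_inj[OF mono Dg] m by blast
    qed
    then show "g m \<in> {y \<in> Mhat. D y = \<zero>\<^bsub>E\<^esub>}" using gMhat[OF m] by simp
  qed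
  then show ?thesis using y by blast
qed

lemma monoform_End_Mhat_eqI:
  assumes mono: "monoform R M" and F1: "F1 \<in> carrier End_Mhat" and F2: "F2 \<in> carrier End_Mhat"
    and N: "nonzero_submodule R M N" and agree: "\<And>x. x \<in> N \<Longrightarrow> F1 (\<iota> x) = F2 (\<iota> x)"
  shows "F1 = F2"
proof -
  have l1: "F1 \<in> lin_map R E Mhat E (carrier E)" and l2: "F2 \<in> lin_map R E Mhat E (carrier E)"
    using End_Mhat_lin_map F1 F2 by auto
  note c1 = lin_mapD(1)[OF l1] and c2 = lin_mapD(1)[OF l2]
  define D where "D x = F1 x \<ominus>\<^bsub>E\<^esub> F2 x" for x
  have "D \<in> lin_map R E Mhat E (carrier E)"
  proof (rule lin_mapI)
    show "D x \<in> carrier E" if "x \<in> Mhat" for x using that c1 c2 unfolding D_def by (simp add: E.M.minus_eq)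
    show "D (x \<oplus>\<^bsub>E\<^esub> y) = D x \<oplus>\<^bsub>E\<^esub> D y" if "x \<in> Mhat" "y \<in> Mhat" for x y
      unfolding D_def using lin_mapD(2)[OF l1 that] lin_mapD(2)[OF l2 that] c1 c2 that
      by (simp add: E.M.minus_eq E.M.minus_add E.M.a_ac)
    show "D (a \<odot>\<^bsub>E\<^esub> x) = a \<odot>\<^bsub>E\<^esub> D x" if "a \<in> carrier R" "x \<in> Mhat" for a x
      unfolding D_def using lin_mapD(3)[OF l1 that] lin_mapD(3)[OF l2 that] c1 c2 that
      by (simp add: E.M.minus_eq E.smult_r_distr E.smult_r_minus)
  qed
  moreover have "D (\<iota> x) = \<zero>\<^bsub>E\<^esub>" if "x \<in> N" for x
  proof -
    have "x \<in> carrier M" using that N M.submoduleE(1) by (auto simp: nonzero_submodule_def)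
    then show ?thesis unfolding D_def using agree[OF that] c2 iota_in_Mhat by (simp add: E.M.minus_eq E.M.r_neg)
  qed
  ultimately have "D y = \<zero>\<^bsub>E\<^esub>" if "y \<in> Mhat" for y
    using monoform_lin_map_vanishes[OF mono _ N _ that] by blast
  then show ?thesis
    using End_Mhat_eqI[OF F1 F2] E.diff_eq_zero_iff c1 c2 unfolding D_def by blast
qed

lemma monoform_End_Mhat_eqI_on_M:
  "monoform R M \<Longrightarrow> F1 \<in> carrier End_Mhat \<Longrightarrow> F2 \<in> carrier End_Mhat \<Longrightarrow>
    (\<And>x. x \<in> carrier M \<Longrightarrow> F1 (\<iota> x) = F2 (\<iota> x)) \<Longrightarrow> F1 = F2"
  by (rule monoform_End_Mhat_eqI) (auto intro: M.nonzero_submodule_carrier M.monoform_nonzero_module)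

lemma monoform_End_Mhat_nonzero:
  assumes mono: "monoform R M" and F: "F \<in> carrier End_Mhat" "F \<noteq> \<zero>\<^bsub>End_Mhat\<^esub>"
  shows "\<exists>x\<in>carrier M. F (\<iota> x) \<noteq> \<zero>\<^bsub>E\<^esub>"
  using monoform_End_Mhat_eqI_on_M[OF mono F(1) End_Mhat_closed_ops(4)] F(2)
    End_Mhat_apply_zero iota_in_Mhat by auto

text \<open>The inverse of a nonzero F is an extension of \<iota> \<circ> (F \<circ> \<iota>)\<inverse> from F(\<iota>(M)); both
  composites are the identity on a nonzero part of \<iota>(M), hence everywhere.\<close>
lemma monoform_End_Mhat_Units:
  assumes mono: "monoform R M" and F: "F \<in> carrier End_Mhat" and F0: "F \<noteq> \<zero>\<^bsub>End_Mhat\<^esub>"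
  shows "F \<in> Units End_Mhat"
proof -
  note CM = M.carrier_is_submodule
  have Fi: "(\<lambda>x. F (\<iota> x)) \<in> lin_map R M (carrier M) E (carrier E)"
    by (rule lin_map_comp[OF iota_lin_map_Mhat End_Mhat_lin_map[OF F]])
  have ex: "\<exists>x\<in>carrier M. F (\<iota> x) \<noteq> \<zero>\<^bsub>E\<^esub>" by (rule monoform_End_Mhat_nonzero[OF mono F F0])
  have Fi_inj: "inj_on (\<lambda>x. F (\<iota> x)) (carrier M)" by (rule monoform_lin_map_into_hull_inj[OF mono Fi ex])
  define A where "A = (\<lambda>x. F (\<iota> x)) ` carrier M"
  have A: "submodule A R E" unfolding A_def
    by (rule image_submodule[OF left_module_M left_module_E CM Fi subset_refl])
  have A_Mhat: "A \<subseteq> Mhat" unfolding A_def using End_Mhat_closed[OF F] iota_in_Mhat by blast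
  have "(\<lambda>y. y) \<in> lin_map R E A E (carrier E)" using A_Mhat Mhat_subset_carrier by (intro lin_map_id) auto
  note inv = lin_map_inv_into[OF left_module_E left_module_M A Fi Fi_inj this, unfolded A_def, simplified]
  define k where "k y = \<iota> (inv_into (carrier M) (\<lambda>x. F (\<iota> x)) y)" for y
  have "k \<in> lin_map R E A E (carrier E)" unfolding k_def A_def by (rule lin_map_comp[OF inv(1) iota_lin_map])
  then obtain G where G: "G \<in> carrier End_Mhat" "\<And>y. y \<in> A \<Longrightarrow> G y = k y"
    by (rule End_Mhat_extend[OF A A_Mhat]) (rule that)
  have "F \<otimes>\<^bsub>End_Mhat\<^esub> G = \<one>\<^bsub>End_Mhat\<^esub>"
  proof (rule monoform_End_Mhat_eqI_on_M[OF mono End_Mhat_closed_ops(1)[OF F G(1)] End_Mhat_closed_ops(3)])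
    fix m assume m: "m \<in> carrier M"
    have "G (F (\<iota> m)) = \<iota> m" using G(2)[of "F (\<iota> m)"] m inv_into_f_f[OF Fi_inj m] by (simp add: A_def k_def)
    then show "(F \<otimes>\<^bsub>End_Mhat\<^esub> G) (\<iota> m) = \<one>\<^bsub>End_Mhat\<^esub> (\<iota> m)"
      using End_Mhat_apply_mult End_Mhat_apply_one iota_in_Mhat[OF m] by simp
  qed
  moreover have "G \<otimes>\<^bsub>End_Mhat\<^esub> F = \<one>\<^bsub>End_Mhat\<^esub>"
  proof -
    define N where "N = {m \<in> carrier M. \<iota> m \<in> A}"
    have Ns: "submodule N R M"
      unfolding N_def by (rule vimage_submodule[OF left_module_M left_module_E CM iota_lin_map subset_refl A])
    have "nonzero_submodule R E A" unfolding nonzero_submodule_def A_def using A ex unfolding A_def by force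
    then obtain m0 where "m0 \<in> carrier M" "\<iota> m0 \<in> A" "m0 \<noteq> \<zero>\<^bsub>M\<^esub>" by (rule iota_essential)
    then have N: "nonzero_submodule R M N" unfolding nonzero_submodule_def N_def using Ns N_def by auto
    show ?thesis
    proof (rule monoform_End_Mhat_eqI[OF mono End_Mhat_closed_ops(1)[OF G(1) F] End_Mhat_closed_ops(3) N])
      fix m assume "m \<in> N"
      then have m: "\<iota> m \<in> A" "m \<in> carrier M" using N_def by auto
      have "F (G (\<iota> m)) = \<iota> m" using G(2)[OF m(1)] inv(2) m(1) unfolding A_def k_def by auto
      then show "(G \<otimes>\<^bsub>End_Mhat\<^esub> F) (\<iota> m) = \<one>\<^bsub>End_Mhat\<^esub> (\<iota> m)"
        using End_Mhat_apply_mult End_Mhat_apply_one iota_in_Mhat[OF m(2)] by simp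
    qed
  qed
  ultimately show ?thesis unfolding Units_def using F G(1) by blast
qed

lemma monoform_division_ring_End_Mhat:
  assumes mono: "monoform R M"
  shows "division_ring End_Mhat"
proof -
  obtain m where m: "m \<in> carrier M" "m \<noteq> \<zero>\<^bsub>M\<^esub>"
    using M.monoform_nonzero_module[OF mono] by (rule M.nonzero_moduleE)
  have "\<one>\<^bsub>End_Mhat\<^esub> (\<iota> m) \<noteq> \<zero>\<^bsub>End_Mhat\<^esub> (\<iota> m)"
    using End_Mhat_apply_one End_Mhat_apply_zero iota_in_Mhat[OF m(1)] iota_nonzero[OF m] by simp
  then have "\<one>\<^bsub>End_Mhat\<^esub> \<noteq> \<zero>\<^bsub>End_Mhat\<^esub>" by metis
  then show ?thesis unfolding division_ring_def using ring_End_Mhat monoform_End_Mhat_Units[OF mono] by blast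
qed

definition lift_End :: "('a \<Rightarrow> 'a) \<Rightarrow> ('e \<Rightarrow> 'e)" where
  "lift_End f = (SOME F. F \<in> carrier End_Mhat \<and> (\<forall>m\<in>carrier M. F (\<iota> m) = \<iota> (f m)))"

lemma lift_End_exists:
  assumes f: "f \<in> carrier (End_ring R M)"
  shows "\<exists>F. F \<in> carrier End_Mhat \<and> (\<forall>m\<in>carrier M. F (\<iota> m) = \<iota> (f m))"
proof -
  define A where "A = \<iota> ` carrier M"
  have A: "submodule A R E" unfolding A_def
    by (rule image_submodule[OF left_module_M left_module_E M.carrier_is_submodule iota_lin_map subset_refl])
  have A_Mhat: "A \<subseteq> Mhat" unfolding A_def using iota_in_Mhat by blast
  have "(\<lambda>y. y) \<in> lin_map R E A E (carrier E)" using A_Mhat Mhat_subset_carrier by (intro lin_map_id) auto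
  note inv = lin_map_inv_into[OF left_module_E left_module_M A iota_lin_map inj_on_iota this, unfolded A_def, simplified]
  have "(\<lambda>y. \<iota> (f (inv_into (carrier M) \<iota> y))) \<in> lin_map R E A E (carrier E)"
    unfolding A_def by (rule lin_map_comp[OF lin_map_comp[OF inv(1) M.End_lin_map[OF f]] iota_lin_map])
  then obtain F where "F \<in> carrier End_Mhat" "\<And>y. y \<in> A \<Longrightarrow> F y = \<iota> (f (inv_into (carrier M) \<iota> y))"
    by (rule End_Mhat_extend[OF A A_Mhat]) (rule that)
  then show ?thesis using inv_into_f_f[OF inj_on_iota] unfolding A_def by auto
qed

lemma lift_End_closed: "f \<in> carrier (End_ring R M) \<Longrightarrow> lift_End f \<in> carrier End_Mhat"
  and lift_End_iota: "f \<in> carrier (End_ring R M) \<Longrightarrow> m \<in> carrier M \<Longrightarrow> lift_End f (\<iota> m) = \<iota> (f m)"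
  using someI_ex[OF lift_End_exists] unfolding lift_End_def by blast+

lemma lift_End_unique:
  "monoform R M \<Longrightarrow> f \<in> carrier (End_ring R M) \<Longrightarrow> F \<in> carrier End_Mhat \<Longrightarrow>
    (\<And>m. m \<in> carrier M \<Longrightarrow> F (\<iota> m) = \<iota> (f m)) \<Longrightarrow> lift_End f = F"
  by (rule monoform_End_Mhat_eqI_on_M) (simp_all add: lift_End_closed lift_End_iota)

lemma monoform_lift_End_ring_hom:
  assumes mono: "monoform R M"
  shows "lift_End \<in> ring_hom (End_ring R M) End_Mhat"
proof (rule ring_hom_memI)
  fix f g assume f: "f \<in> carrier (End_ring R M)" and g: "g \<in> carrier (End_ring R M)"
  show "lift_End f \<in> carrier End_Mhat" by (rule lift_End_closed[OF f])
  show "lift_End (f \<otimes>\<^bsub>End_ring R M\<^esub> g) = lift_End f \<otimes>\<^bsub>End_Mhat\<^esub> lift_End g"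
    by (rule lift_End_unique[OF mono M.End_mult_closed[OF f g] End_Mhat_closed_ops(1)[OF lift_End_closed[OF f] lift_End_closed[OF g]]])
      (simp add: End_Mhat_apply_mult iota_in_Mhat lift_End_iota f g M.End_closed M.End_apply_mult)
  show "lift_End (f \<oplus>\<^bsub>End_ring R M\<^esub> g) = lift_End f \<oplus>\<^bsub>End_Mhat\<^esub> lift_End g"
    by (rule lift_End_unique[OF mono M.End_add_closed[OF f g] End_Mhat_closed_ops(2)[OF lift_End_closed[OF f] lift_End_closed[OF g]]])
      (simp add: End_Mhat_apply_add iota_in_Mhat lift_End_iota f g M.End_closed M.End_apply_add lin_mapD(2)[OF iota_lin_map])
next
  show "lift_End \<one>\<^bsub>End_ring R M\<^esub> = \<one>\<^bsub>End_Mhat\<^esub>"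
    by (rule lift_End_unique[OF mono M.End_one_closed End_Mhat_closed_ops(3)])
      (simp add: End_Mhat_apply_one iota_in_Mhat M.End_apply_one)
qed

lemma inj_on_lift_End: "inj_on lift_End (carrier (End_ring R M))"
proof (rule inj_onI)
  fix f g assume f: "f \<in> carrier (End_ring R M)" and g: "g \<in> carrier (End_ring R M)"
    and "lift_End f = lift_End g"
  then have "\<iota> (f m) = \<iota> (g m)" if "m \<in> carrier M" for m using lift_End_iota that by metis
  then show "f = g" using M.End_eqI[OF f g] inj_onD[OF inj_on_iota] M.End_closed f g by blast
qed

end

lemma division_ring_ring_iso:
  assumes Q: "ring Q" and iso: "Q \<simeq> Q'" and D: "division_ring Q'"
  shows "division_ring Q"
proof -
  interpret Q: ring Q by (rule Q)
  interpret Q': ring Q' using D by (simp add: division_ring_def)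
  obtain \<psi> where \<psi>: "\<psi> \<in> ring_hom Q Q'" "bij_betw \<psi> (carrier Q) (carrier Q')"
    using iso unfolding is_ring_iso_def ring_iso_def by blast
  have inj: "inj_on \<psi> (carrier Q)" and onto: "\<psi> ` carrier Q = carrier Q'"
    using \<psi>(2) by (auto simp: bij_betw_def)
  have \<psi>0: "\<psi> \<zero>\<^bsub>Q\<^esub> = \<zero>\<^bsub>Q'\<^esub>" and \<psi>1: "\<psi> \<one>\<^bsub>Q\<^esub> = \<one>\<^bsub>Q'\<^esub>"
    using ring_hom_zero[OF \<psi>(1) Q.ring_axioms Q'.ring_axioms] ring_hom_one[OF \<psi>(1)] by auto
  have "\<one>\<^bsub>Q\<^esub> \<noteq> \<zero>\<^bsub>Q\<^esub>" using \<psi>0 \<psi>1 D by (auto simp: division_ring_def)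
  moreover have "F \<in> Units Q" if F: "F \<in> carrier Q" "F \<noteq> \<zero>\<^bsub>Q\<^esub>" for F
  proof -
    have "\<psi> F \<noteq> \<zero>\<^bsub>Q'\<^esub>" using inj \<psi>0 F by (metis inj_onD Q.zero_closed)
    then have "\<psi> F \<in> Units Q'" using D ring_hom_closed[OF \<psi>(1) F(1)] by (auto simp: division_ring_def)
    then obtain y where y: "y \<in> carrier Q'" "\<psi> F \<otimes>\<^bsub>Q'\<^esub> y = \<one>\<^bsub>Q'\<^esub>" "y \<otimes>\<^bsub>Q'\<^esub> \<psi> F = \<one>\<^bsub>Q'\<^esub>"
      unfolding Units_def by blast
    obtain G where G: "G \<in> carrier Q" "y = \<psi> G" using y(1) onto by blast
    have "\<psi> (F \<otimes>\<^bsub>Q\<^esub> G) = \<psi> \<one>\<^bsub>Q\<^esub>" "\<psi> (G \<otimes>\<^bsub>Q\<^esub> F) = \<psi> \<one>\<^bsub>Q\<^esub>"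
      using ring_hom_mult[OF \<psi>(1)] F(1) G y(2,3) \<psi>1 by auto
    then have "F \<otimes>\<^bsub>Q\<^esub> G = \<one>\<^bsub>Q\<^esub>" "G \<otimes>\<^bsub>Q\<^esub> F = \<one>\<^bsub>Q\<^esub>"
      using inj_onD[OF inj] F(1) G(1) by auto
    then show ?thesis unfolding Units_def using F(1) G(1) by blast
  qed
  ultimately show ?thesis unfolding division_ring_def using Q by blast
qed

context injective_hull_setting
begin

text \<open>Every nonzero q is a left fraction: pick an embedding u of M into the nonzero
  submodule {x. q(\<iota> x) \<in> \<iota>(M)}; then q \<circ> \<iota> \<circ> u = \<iota> \<circ> t for an endomorphism t.\<close>
lemma compressible_monoform_left_fraction:
  assumes comp: "compressible R M" and mono: "monoform R M"
    and q: "q \<in> carrier End_Mhat" "q \<noteq> \<zero>\<^bsub>End_Mhat\<^esub>"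
  obtains s t where "s \<in> carrier (End_ring R M)" "s \<noteq> \<zero>\<^bsub>End_ring R M\<^esub>" "t \<in> carrier (End_ring R M)"
    "lift_End s \<otimes>\<^bsub>End_Mhat\<^esub> q = lift_End t"
proof -
  let ?S = "End_ring R M"
  note CM = M.carrier_is_submodule
  have qi: "(\<lambda>x. q (\<iota> x)) \<in> lin_map R M (carrier M) E (carrier E)"
    by (rule lin_map_comp[OF iota_lin_map_Mhat End_Mhat_lin_map[OF q(1)]])
  have Is: "submodule (\<iota> ` carrier M) R E"
    by (rule image_submodule[OF left_module_M left_module_E CM iota_lin_map subset_refl])
  define N where "N = {x \<in> carrier M. q (\<iota> x) \<in> \<iota> ` carrier M}"
  have Ns: "submodule N R M"
    unfolding N_def by (rule vimage_submodule[OF left_module_M left_module_E CM qi subset_refl Is])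
  obtain m1 where m1: "m1 \<in> carrier M" "\<iota> m1 \<in> (\<lambda>x. q (\<iota> x)) ` carrier M" "m1 \<noteq> \<zero>\<^bsub>M\<^esub>"
    using nonzero_image_submodule[OF qi monoform_End_Mhat_nonzero[OF mono q]] by (rule iota_essential)
  then obtain x1 where x1: "x1 \<in> carrier M" "q (\<iota> x1) = \<iota> m1" by auto
  have "x1 \<noteq> \<zero>\<^bsub>M\<^esub>"
    using x1 iota_nonzero[OF m1(1,3)] lin_map_zero[OF left_module_M left_module_E CM qi subset_refl] by auto
  then have "nonzero_submodule R M N" unfolding nonzero_submodule_def using Ns x1 m1(1) N_def by auto
  then obtain u where u: "u \<in> lin_map R M (carrier M) M N" and u_inj: "inj_on u (carrier M)"
    using comp unfolding compressible_def embeds_def by blast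
  have uM: "u \<in> lin_map R M (carrier M) M (carrier M)"
    by (rule lin_map_codomain_mono[OF u M.submoduleE(1)[OF Ns]])
  define s where "s = restrict u (carrier M)"
  have s: "s \<in> carrier ?S" unfolding s_def by (rule M.End_restrict_closed[OF uM])
  obtain m where m: "m \<in> carrier M" "m \<noteq> \<zero>\<^bsub>M\<^esub>"
    using M.monoform_nonzero_module[OF mono] by (rule M.nonzero_moduleE)
  have "u m \<noteq> \<zero>\<^bsub>M\<^esub>" using lin_map_inj_on_iff[OF left_module_M left_module_M CM uM subset_refl] u_inj m by blast
  then have s0: "s \<noteq> \<zero>\<^bsub>?S\<^esub>" using M.End_nonzero_iff[OF s] m unfolding s_def by auto
  define w where "w x = q (\<iota> (u x))" for x
  have w: "w \<in> lin_map R M (carrier M) E (carrier E)" unfolding w_def by (rule lin_map_comp[OF uM qi])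
  have w_range: "w x \<in> \<iota> ` carrier M" if "x \<in> carrier M" for x
    using lin_mapD(1)[OF u that] unfolding w_def N_def by blast
  note inv = lin_map_inv_into[OF left_module_M left_module_M CM iota_lin_map inj_on_iota w w_range]
  define t where "t = restrict (\<lambda>x. inv_into (carrier M) \<iota> (w x)) (carrier M)"
  have t: "t \<in> carrier ?S" unfolding t_def by (rule M.End_restrict_closed[OF inv(1)])
  have "lift_End s \<otimes>\<^bsub>End_Mhat\<^esub> q = lift_End t"
  proof (rule monoform_End_Mhat_eqI_on_M[OF mono End_Mhat_closed_ops(1)[OF lift_End_closed[OF s] q(1)] lift_End_closed[OF t]])
    fix x assume x: "x \<in> carrier M"
    have "(lift_End s \<otimes>\<^bsub>End_Mhat\<^esub> q) (\<iota> x) = q (\<iota> (u x))"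
      using End_Mhat_apply_mult[OF iota_in_Mhat[OF x]] lift_End_iota[OF s x] x by (simp add: s_def)
    also have "\<dots> = lift_End t (\<iota> x)" using inv(2) lift_End_iota[OF t x] x by (simp add: t_def w_def)
    finally show "(lift_End s \<otimes>\<^bsub>End_Mhat\<^esub> q) (\<iota> x) = lift_End t (\<iota> x)" .
  qed
  then show thesis using that s s0 t by blast
qed

lemma compressible_monoform_division_ring_of_fractions:
  assumes comp: "compressible R M" and mono: "monoform R M"
  shows "division_ring_of_fractions (End_ring R M) End_Mhat lift_End"
proof -
  let ?S = "End_ring R M"
  interpret Q: ring End_Mhat by (rule ring_End_Mhat)
  interpret S: ring ?S by (rule M.ring_End_ring)
  have hom: "lift_End \<in> ring_hom ?S End_Mhat" by (rule monoform_lift_End_ring_hom[OF mono])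
  have lift0: "lift_End \<zero>\<^bsub>?S\<^esub> = \<zero>\<^bsub>End_Mhat\<^esub>" by (rule ring_hom_zero[OF hom S.ring_axioms Q.ring_axioms])
  have units: "lift_End s \<in> Units End_Mhat" if "s \<in> carrier ?S - {\<zero>\<^bsub>?S\<^esub>}" for s
  proof -
    have "lift_End s \<noteq> \<zero>\<^bsub>End_Mhat\<^esub>" using inj_on_lift_End lift0 that by (metis DiffE inj_onD S.zero_closed singletonI)
    then show ?thesis using monoform_End_Mhat_Units[OF mono lift_End_closed] that by blast
  qed
  have "\<exists>s\<in>carrier ?S - {\<zero>\<^bsub>?S\<^esub>}. \<exists>t\<in>carrier ?S. q = inv\<^bsub>End_Mhat\<^esub> (lift_End s) \<otimes>\<^bsub>End_Mhat\<^esub> lift_End t"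
    if q: "q \<in> carrier End_Mhat" for q
  proof (cases "q = \<zero>\<^bsub>End_Mhat\<^esub>")
    case True
    have "\<one>\<^bsub>?S\<^esub> \<noteq> \<zero>\<^bsub>?S\<^esub>" by (rule M.End_one_neq_zero[OF M.monoform_nonzero_module[OF mono]])
    moreover have "q = inv\<^bsub>End_Mhat\<^esub> (lift_End \<one>\<^bsub>?S\<^esub>) \<otimes>\<^bsub>End_Mhat\<^esub> lift_End \<zero>\<^bsub>?S\<^esub>"
      using True lift0 ring_hom_one[OF hom] by simp
    ultimately show ?thesis by blast
  next
    case False
    then obtain s t where s: "s \<in> carrier ?S" "s \<noteq> \<zero>\<^bsub>?S\<^esub>" and t: "t \<in> carrier ?S"
      and st: "lift_End s \<otimes>\<^bsub>End_Mhat\<^esub> q = lift_End t"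
      by (rule compressible_monoform_left_fraction[OF comp mono q]) (rule that)
    have U: "lift_End s \<in> Units End_Mhat" using units s by blast
    have "inv\<^bsub>End_Mhat\<^esub> (lift_End s) \<otimes>\<^bsub>End_Mhat\<^esub> lift_End t
        = inv\<^bsub>End_Mhat\<^esub> (lift_End s) \<otimes>\<^bsub>End_Mhat\<^esub> (lift_End s \<otimes>\<^bsub>End_Mhat\<^esub> q)"
      using st by simp
    also have "\<dots> = (inv\<^bsub>End_Mhat\<^esub> (lift_End s) \<otimes>\<^bsub>End_Mhat\<^esub> lift_End s) \<otimes>\<^bsub>End_Mhat\<^esub> q"
      by (rule Q.m_assoc[symmetric]) (use U q in \<open>auto intro: Q.Units_closed Q.Units_inv_closed\<close>)
    also have "\<dots> = q" using U q by (simp add: Q.Units_l_inv)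
    finally show ?thesis using s t by blast
  qed
  then show ?thesis unfolding division_ring_of_fractions_def
    using monoform_division_ring_End_Mhat[OF mono] hom inj_on_lift_End units by blast
qed

text \<open>A nonzero f : N \<rightarrow> M extends, through \<iota>, to a nonzero and hence invertible
  endomorphism of Mhat.\<close>
lemma division_ring_End_Mhat_imp_monoform:
  assumes nonzero: "nonzero_module M" and D: "division_ring End_Mhat"
  shows "monoform R M"
  unfolding monoform_def
proof (intro conjI nonzero allI impI)
  fix N f assume N: "submodule N R M" and f: "f \<in> lin_map R M N M (carrier M)"
    and ex: "\<exists>x\<in>N. f x \<noteq> \<zero>\<^bsub>M\<^esub>"
  have NM: "N \<subseteq> carrier M" using M.submoduleE(1)[OF N] .
  have iota_N: "\<iota> \<in> lin_map R M N E (carrier E)"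
    by (rule lin_map_mono[OF iota_lin_map NM]) (use lin_mapD(1)[OF iota_lin_map] NM in blast)
  define A where "A = \<iota> ` N"
  have A: "submodule A R E" unfolding A_def
    by (rule image_submodule[OF left_module_M left_module_E N iota_N subset_refl])
  have A_Mhat: "A \<subseteq> Mhat" unfolding A_def using iota_in_Mhat NM by blast
  have "(\<lambda>y. y) \<in> lin_map R E A E (carrier E)" using A_Mhat Mhat_subset_carrier by (intro lin_map_id) auto
  note inv = lin_map_inv_into[OF left_module_E left_module_M A iota_lin_map inj_on_iota this]
  have inv_N: "(\<lambda>y. inv_into (carrier M) \<iota> y) \<in> lin_map R E A M N"
    by (rule lin_map_mono[OF inv(1)]) (use NM inv_into_f_f[OF inj_on_iota] in \<open>auto simp: A_def\<close>)
  have "(\<lambda>y. \<iota> (f (inv_into (carrier M) \<iota> y))) \<in> lin_map R E A E (carrier E)"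
    by (rule lin_map_comp[OF lin_map_comp[OF inv_N f] iota_lin_map])
  then obtain F where F: "F \<in> carrier End_Mhat" and FA: "\<And>y. y \<in> A \<Longrightarrow> F y = \<iota> (f (inv_into (carrier M) \<iota> y))"
    by (rule End_Mhat_extend[OF A A_Mhat]) (rule that)
  have F_iota: "F (\<iota> n) = \<iota> (f n)" if "n \<in> N" for n
    using FA[of "\<iota> n"] inv_into_f_f[OF inj_on_iota] that NM unfolding A_def by auto
  obtain x where x: "x \<in> N" "f x \<noteq> \<zero>\<^bsub>M\<^esub>" using ex by blast
  have "F (\<iota> x) \<noteq> \<zero>\<^bsub>End_Mhat\<^esub> (\<iota> x)"
    using F_iota[OF x(1)] iota_nonzero[OF lin_mapD(1)[OF f x(1)] x(2)] End_Mhat_apply_zero iota_in_Mhat x(1) NM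
    by auto
  then have "F \<noteq> \<zero>\<^bsub>End_Mhat\<^esub>" by metis
  then obtain G where G: "G \<in> carrier End_Mhat" "F \<otimes>\<^bsub>End_Mhat\<^esub> G = \<one>\<^bsub>End_Mhat\<^esub>"
    using D F unfolding division_ring_def Units_def by blast
  have GF: "G (F y) = y" if "y \<in> Mhat" for y
    using End_Mhat_apply_mult[OF that, of F G] End_Mhat_apply_one[OF that] G(2) by simp
  show "inj_on f N"
  proof (rule inj_onI)
    fix n1 n2 assume n: "n1 \<in> N" "n2 \<in> N" "f n1 = f n2"
    have "\<iota> n1 = G (F (\<iota> n1))" using GF iota_in_Mhat n NM by auto
    also have "\<dots> = G (F (\<iota> n2))" using F_iota n by simp
    also have "\<dots> = \<iota> n2" using GF iota_in_Mhat n NM by auto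
    finally show "n1 = n2" using inj_onD[OF inj_on_iota] n NM by blast
  qed
qed

lemma fully_retractable_left_ore_domain_iff:
  "fully_retractable R M \<and> left_ore_domain (End_ring R M) \<longleftrightarrow>
   retractable R M \<and> left_ore_domain (End_ring R M) \<and>
   (\<exists>(Q :: ('e \<Rightarrow> 'e) ring) \<phi>. division_ring_of_fractions (End_ring R M) Q \<phi> \<and> End_Mhat \<simeq> Q)"
proof
  assume "fully_retractable R M \<and> left_ore_domain (End_ring R M)"
  moreover from this have "compressible R M" "monoform R M"
    using M.compressible_monoform_iff_fully_retractable_left_ore_domain by auto
  ultimately show "retractable R M \<and> left_ore_domain (End_ring R M) \<and>
      (\<exists>(Q :: ('e \<Rightarrow> 'e) ring) \<phi>. division_ring_of_fractions (End_ring R M) Q \<phi> \<and> End_Mhat \<simeq> Q)"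
    using M.fully_retractable_imp_retractable compressible_monoform_division_ring_of_fractions ring_iso_refl
    by blast
next
  assume "retractable R M \<and> left_ore_domain (End_ring R M) \<and>
      (\<exists>(Q :: ('e \<Rightarrow> 'e) ring) \<phi>. division_ring_of_fractions (End_ring R M) Q \<phi> \<and> End_Mhat \<simeq> Q)"
  then obtain Q :: "('e \<Rightarrow> 'e) ring" and \<phi> where r: "retractable R M"
    and ore: "left_ore_domain (End_ring R M)"
    and Q: "division_ring_of_fractions (End_ring R M) Q \<phi>" "End_Mhat \<simeq> Q" by blast
  have "division_ring End_Mhat"
    using division_ring_ring_iso[OF ring_End_Mhat Q(2)] Q(1) by (simp add: division_ring_of_fractions_def)
  then have mono: "monoform R M"
    by (rule division_ring_End_Mhat_imp_monoform[OF M.left_ore_domain_End_imp_nonzero_module[OF ore]])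
  show "fully_retractable R M \<and> left_ore_domain (End_ring R M)"
    using M.retractable_monoform_imp_compressible[OF r mono] mono
      M.compressible_monoform_iff_fully_retractable_left_ore_domain by blast
qed

end

theorem proposition3p1:
  fixes R :: "('r, 'c) ring_scheme"
    and M :: "('r, 'a) module"
    and E :: "('r, 'e) module"
    and \<iota> :: "'a \<Rightarrow> 'e"
  assumes "left_module R M"
    and "injective_hull R M E \<iota>"
  shows "(critically_compressible R M \<longleftrightarrow> compressible R M \<and> monoform R M)
       \<and> (compressible R M \<and> monoform R M \<longleftrightarrow>
            fully_retractable R M \<and> left_ore_domain (End_ring R M))
       \<and> (fully_retractable R M \<and> left_ore_domain (End_ring R M) \<longleftrightarrow>
            retractable R M \<and> left_ore_domain (End_ring R M) \<and>
            (\<exists>(Q :: ('e \<Rightarrow> 'e) ring) \<phi>.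
               division_ring_of_fractions (End_ring R M) Q \<phi> \<and>
               End_ring R (E\<lparr>carrier := self_injective_hull R M E\<rparr>) \<simeq> Q))"
proof -
  interpret injective_hull_setting R M E \<iota> by (rule injective_hull_setting.intro[OF assms])
  show ?thesis
    using M.critically_compressible_iff_compressible_monoform
      M.compressible_monoform_iff_fully_retractable_left_ore_domain
      fully_retractable_left_ore_domain_iff
    by blast
qed

end
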